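(* Let $\Omega\subset\mathbb{R}^d$ be compact with a probability measure $\mu$, let $2\le p<\infty$, and let $\mathcal{D}_N=\{\varphi_j\}_{j=1}^N\subset\mathcal{C}(\Omega)$ be a uniformly bounded Riesz system, i.e. $\sup_{x\in\Omega}|\varphi_j(x)|\le 1$ for all $j$ and, for some constants $0<R_1\le R_2<\infty$ and all $(a_1,\dots,a_N)\in\mathbb{C}^N$, $$R_1\Big(\sum_{j=1}^N|a_j|^2\Big)^{1/2}\le\Big\|\sum_{j=1}^N a_j\varphi_j\Big\|_{L_2(\Omega,\mu)}\le R_2\Big(\sum_{j=1}^N|a_j|^2\Big)^{1/2}.$$ Let $1\le u\le N$ be an integer, and let $\Omega_m=\{\xi^1,\dots,\xi^m\}\subset\Omega$ provide $L_2$-universal sampling discretization for the collection $\mathcal{X}_u(\mathcal{D}_N)$. Assume in addition that $\mathcal{D}_N\in NI(2,p,H,u)$. Then for every weakness parameter $t\in(0,1]$ there exists an integer $c=c(t,R_1,R_2)\ge 1$ such that for every integer $0\le v\le u/(1+c)$ and every $f_0\in\mathcal{C}(\Omega)$, the algorithm $\mathrm{WOMP}(\mathcal{D}_N(\Omega_m);t)_{L_2(\Omega_m,\mu_m)}$ applied to $f_0$ satisfies $$\|f_{cv}\|_{L_2(\Omega_m,\mu_m)}\le C_0\,\sigma_v(f_0,\mathcal{D}_N(\Omega_m))_{L_2(\Omega_m,\mu_m)},$$ $$\|f_{cv}\|_{L_p(\Omega,\mu)}\le H C_1\,\sigma_v(f_0,\mathcal{D}_N)_{L_p(\Omega,\mu_\xi)},$$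 where $C_0,C_1$ are absolute constants and $f_k$ is the residual after the $k$-th iteration.
   Context: For a system $\mathcal{D}=\{g_i\}$ in a normed space $X$ and a finite index set $J$, $V_J(\mathcal{D})=\operatorname{span}\{g_j:j\in J\}$; $\mathcal{X}_v(\mathcal{D})$ is the collection of all $V_J(\mathcal{D})$ with $|J|=v$; $\Sigma_v(\mathcal{D})=\bigcup_{V\in\mathcal{X}_v(\mathcal{D})}V$ (all $v$-term linear combinations); $\sigma_v(f,\mathcal{D})_X=\inf_{g\in\Sigma_v(\mathcal{D})}\|f-g\|_X$. For a measure $\nu$ on $\Omega$, $\|f\|_{L_p(\nu)}=(\int_\Omega|f|^p d\nu)^{1/p}$. A set $\xi=\{\xi^j\}_{j=1}^m\subset\Omega$ provides $L_p$-universal sampling discretization for a collection $\mathcal{X}$ of finite-dimensional subspaces if $\frac12\|f\|_p^p\le\frac1m\sum_{j=1}^m|f(\xi^j)|^p\le\frac32\|f\|_p^p$ for all $f\in\bigcup_{X\in\mathcal{X}}X$. $\mu_m=\frac1m\sum_{j=1}^m\delta_{\xi^j}$ is the uniform probability measure on $\Omega_m$, $L_2(\Omega_m,\mu_m)$ the corresponding Hilbert space, and $\mu_\xi=(\mu+\mu_m)/2$. $\mathcal{D}_N(\Omega_m)$ is the system of restrictions of the $\varphi_j$ to $\Omega_m$. $u$-term Nikol'skii inequality: for $1\le q\le p\le\infty$, a system $\Psi$ satisfies $\Psi\in NI(q,p,H,u)$ if $\|f\|_{L_p(\Omega,\mu)}\le H\|f\|_{L_q(\Omega,\mu)}$ for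 all $f\in\Sigma_u(\Psi)$ (necessarily $H\ge1$). WOMP: given a Hilbert space $H$ with inner product $\langle\cdot,\cdot\rangle$, a system $\mathcal{D}$ of nonzero elements of norm $\le1$, $t\in(0,1]$ and $f_0\in H$: for $k=1,2,\dots$ choose $g_k\in\mathcal{D}$ with $|\langle f_{k-1},g_k\rangle|\ge t\sup_{g\in\mathcal{D}}|\langle f_{k-1},g\rangle|$; let $G_k(f_0)$ be the orthogonal projection of $f_0$ onto $\operatorname{span}\{g_1,\dots,g_k\}$, and $f_k=f_0-G_k(f_0)$. Here it is run in $L_2(\Omega_m,\mu_m)$ on $f_0|_{\Omega_m}$ with dictionary $\mathcal{D}_N(\Omega_m)$; the projection $G_k(f_0)=\sum c_i\varphi_{i}|_{\Omega_m}$ (a combination of the selected elements) is identified with the function $\sum c_i\varphi_i$ on $\Omega$, and $f_k=f_0-G_k(f_0)$ is regarded as a function on $\Omega$ when its $L_p(\Omega,\mu)$ norm is taken. *)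

theory Defs
  imports "HOL-Analysis.Analysis" "HOL-Probability.Probability"
begin

text \<open>Points of R^d are represented as elements of nat => real vanishing at all
coordinates i >= d (product topology = Euclidean topology on that subspace).\<close>

definition Lp_norm :: "'a measure \<Rightarrow> real \<Rightarrow> ('a \<Rightarrow> complex) \<Rightarrow> real" where
  "Lp_norm M p f = (\<integral>x. cmod (f x) powr p \<partial>M) powr (1 / p)"

definition dinner :: "nat \<Rightarrow> (nat \<Rightarrow> 'a) \<Rightarrow> ('a \<Rightarrow> complex) \<Rightarrow> ('a \<Rightarrow> complex) \<Rightarrow> complex" where
  "dinner m \<xi> f g = (\<Sum>j\<in>{1..m}. f (\<xi> j) * cnj (g (\<xi> j))) / of_nat m"

definition dnorm :: "nat \<Rightarrow> (nat \<Rightarrow> 'a) \<Rightarrow> ('a \<Rightarrow> complex) \<Rightarrow> real" where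
  "dnorm m \<xi> f = sqrt ((\<Sum>j\<in>{1..m}. (cmod (f (\<xi> j)))\<^sup>2) / real m)"

text \<open>L_p(Omega, mu_xi) norm, mu_xi = (mu + mu_m)/2, with the integral written out.\<close>
definition Lp_xi_norm :: "'a measure \<Rightarrow> nat \<Rightarrow> (nat \<Rightarrow> 'a) \<Rightarrow> real \<Rightarrow> ('a \<Rightarrow> complex) \<Rightarrow> real" where
  "Lp_xi_norm M m \<xi> p f =
     ((1/2) * (\<integral>x. cmod (f x) powr p \<partial>M)
      + (1/2) * ((\<Sum>j\<in>{1..m}. cmod (f (\<xi> j)) powr p) / real m)) powr (1 / p)"

definition Sigma_terms :: "(nat \<Rightarrow> 'a \<Rightarrow> complex) \<Rightarrow> nat \<Rightarrow> nat \<Rightarrow> ('a \<Rightarrow> complex) set" where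
  "Sigma_terms \<phi> N v =
     {(\<lambda>x. \<Sum>j\<in>J. a j * \<phi> j x) | J a. J \<subseteq> {1..N} \<and> card J = v}"

definition sigma_disc :: "nat \<Rightarrow> (nat \<Rightarrow> 'a) \<Rightarrow> (nat \<Rightarrow> 'a \<Rightarrow> complex) \<Rightarrow> nat \<Rightarrow> nat
     \<Rightarrow> ('a \<Rightarrow> complex) \<Rightarrow> real" where
  "sigma_disc m \<xi> \<phi> N v f = (INF g\<in>Sigma_terms \<phi> N v. dnorm m \<xi> (\<lambda>x. f x - g x))"

definition sigma_xi :: "'a measure \<Rightarrow> nat \<Rightarrow> (nat \<Rightarrow> 'a) \<Rightarrow> real \<Rightarrow> (nat \<Rightarrow> 'a \<Rightarrow> complex)
     \<Rightarrow> nat \<Rightarrow> nat \<Rightarrow> ('a \<Rightarrow> complex) \<Rightarrow> real" where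
  "sigma_xi M m \<xi> p \<phi> N v f = (INF g\<in>Sigma_terms \<phi> N v. Lp_xi_norm M m \<xi> p (\<lambda>x. f x - g x))"

definition riesz_system :: "'a measure \<Rightarrow> (nat \<Rightarrow> 'a \<Rightarrow> complex) \<Rightarrow> nat \<Rightarrow> real \<Rightarrow> real \<Rightarrow> bool" where
  "riesz_system M \<phi> N R1 R2 \<longleftrightarrow>
     (\<forall>a :: nat \<Rightarrow> complex.
        R1 * sqrt (\<Sum>j\<in>{1..N}. (cmod (a j))\<^sup>2) \<le> Lp_norm M 2 (\<lambda>x. \<Sum>j\<in>{1..N}. a j * \<phi> j x)
      \<and> Lp_norm M 2 (\<lambda>x. \<Sum>j\<in>{1..N}. a j * \<phi> j x) \<le> R2 * sqrt (\<Sum>j\<in>{1..N}. (cmod (a j))\<^sup>2))"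

definition universal_discretization ::
  "'a measure \<Rightarrow> real \<Rightarrow> nat \<Rightarrow> (nat \<Rightarrow> 'a) \<Rightarrow> (nat \<Rightarrow> 'a \<Rightarrow> complex) \<Rightarrow> nat \<Rightarrow> nat \<Rightarrow> bool" where
  "universal_discretization M p m \<xi> \<phi> N u \<longleftrightarrow>
     (\<forall>J \<subseteq> {1..N}. card J = u \<longrightarrow> (\<forall>a :: nat \<Rightarrow> complex.
        let f = (\<lambda>x. \<Sum>j\<in>J. a j * \<phi> j x) in
          (1/2) * Lp_norm M p f powr p \<le> (\<Sum>j\<in>{1..m}. cmod (f (\<xi> j)) powr p) / real m
        \<and> (\<Sum>j\<in>{1..m}. cmod (f (\<xi> j)) powr p) / real m \<le> (3/2) * Lp_norm M p f powr p))"

definition nikolskii :: "'a measure \<Rightarrow> (nat \<Rightarrow> 'a \<Rightarrow> complex) \<Rightarrow> nat \<Rightarrow> real \<Rightarrow> real \<Rightarrow> real \<Rightarrow> nat \<Rightarrow> bool" where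
  "nikolskii M \<phi> N q p H u \<longleftrightarrow>
     (\<forall>f\<in>Sigma_terms \<phi> N u. Lp_norm M p f \<le> H * Lp_norm M q f)"

text \<open>A run of WOMP(D_N(Omega_m); t) in L_2(Omega_m, mu_m) started at f0:
  g k is the index of the element chosen at step k (k >= 1); F k is the residual
  f_k = f0 - G_k(f0) viewed as a function on Omega, where G_k(f0) = sum_i c_i phi_{g i}
  restricts on Omega_m to the orthogonal projection of f0 onto span{phi_{g 1},...,phi_{g k}}.\<close>
definition womp_run :: "nat \<Rightarrow> (nat \<Rightarrow> 'a) \<Rightarrow> (nat \<Rightarrow> 'a \<Rightarrow> complex) \<Rightarrow> nat \<Rightarrow> real
     \<Rightarrow> ('a \<Rightarrow> complex) \<Rightarrow> (nat \<Rightarrow> nat) \<Rightarrow> (nat \<Rightarrow> 'a \<Rightarrow> complex) \<Rightarrow> bool" where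
  "womp_run m \<xi> \<phi> N t f0 g F \<longleftrightarrow>
     (\<forall>k\<ge>1. g k \<in> {1..N}
        \<and> t * Max ((\<lambda>j. cmod (dinner m \<xi> (F (k - 1)) (\<phi> j))) ` {1..N})
            \<le> cmod (dinner m \<xi> (F (k - 1)) (\<phi> (g k))))
   \<and> (\<forall>k. \<exists>c :: nat \<Rightarrow> complex. F k = (\<lambda>x. f0 x - (\<Sum>i\<in>{1..k}. c i * \<phi> (g i) x)))
   \<and> (\<forall>k. \<forall>i\<in>{1..k}. dinner m \<xi> (F k) (\<phi> (g i)) = 0)"

end

theory Submission
  imports Defs
begin

text \<open>On the sampling points the Riesz system becomes a restricted isometry for the empirical
  inner product: for combinations of at most \<open>u\<close> terms the discrete squared norm lies between
  \<open>R1^2/2\<close> and \<open>3 R2^2/2\<close> times the squared coefficient norm. Under such an isometry WOMP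
  behaves like a Lebesgue-type algorithm. Fix a best \<open>v\<close>-term competitor; as long as the
  residual error exceeds the competitor's, each step removes a fixed fraction of the excess per
  index of the competitor's support not yet chosen. Sorting that support by coefficient size and
  running dyadic stages, either the error has dropped to a multiple of the competitor's error or
  more than half of a block of heavy indices has been chosen; induction on the number of
  unchosen indices gives the discrete bound after \<open>c v\<close> steps. For the \<open>L_p\<close> bound, the
  residual is the competitor's error plus a \<open>u\<close>-sparse function, to which the Nikol'skii
  inequality, the discretization and the discrete bound apply.\<close>

section \<open>Discrete L2 norm and linear combinations\<close>

definition dnorm2 :: "nat \<Rightarrow> (nat \<Rightarrow> 'a) \<Rightarrow> ('a \<Rightarrow> complex) \<Rightarrow> real" where
  "dnorm2 m \<xi> f = (\<Sum>j\<in>{1..m}. (cmod (f (\<xi> j)))\<^sup>2) / real m"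

definition lincomb :: "(nat \<Rightarrow> 'a \<Rightarrow> complex) \<Rightarrow> nat set \<Rightarrow> (nat \<Rightarrow> complex) \<Rightarrow> 'a \<Rightarrow> complex" where
  "lincomb \<phi> J \<beta> = (\<lambda>x. \<Sum>j\<in>J. \<beta> j * \<phi> j x)"

lemma dnorm2_nonneg: "0 \<le> dnorm2 m \<xi> f"
  unfolding dnorm2_def by (intro divide_nonneg_nonneg sum_nonneg) auto

lemma dnorm_nonneg: "0 \<le> dnorm m \<xi> f"
  unfolding dnorm_def by (intro real_sqrt_ge_zero divide_nonneg_nonneg sum_nonneg) auto

lemma dnorm_eq_sqrt: "dnorm m \<xi> f = sqrt (dnorm2 m \<xi> f)"
  unfolding dnorm_def dnorm2_def by simp

lemma power2_dnorm: "(dnorm m \<xi> f)\<^sup>2 = dnorm2 m \<xi> f"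
  by (simp add: dnorm_eq_sqrt dnorm2_nonneg)

lemma dnorm2_diff:
  "dnorm2 m \<xi> (\<lambda>x. f x - h x) = dnorm2 m \<xi> f - 2 * Re (dinner m \<xi> f h) + dnorm2 m \<xi> h"
proof -
  have cmod_diff: "(cmod (x - y))\<^sup>2 = (cmod x)\<^sup>2 - 2 * Re (x * cnj y) + (cmod y)\<^sup>2" for x y :: complex
    unfolding cmod_power2 by (simp add: power2_eq_square algebra_simps)
  have "(\<Sum>j\<in>{1..m}. (cmod (f (\<xi> j) - h (\<xi> j)))\<^sup>2) =
     (\<Sum>j\<in>{1..m}. (cmod (f (\<xi> j)))\<^sup>2) - 2 * (\<Sum>j\<in>{1..m}. Re (f (\<xi> j) * cnj (h (\<xi> j))))
       + (\<Sum>j\<in>{1..m}. (cmod (h (\<xi> j)))\<^sup>2)"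
    by (simp add: cmod_diff sum.distrib sum_subtractf sum_distrib_left)
  moreover have "Re (dinner m \<xi> f h) = (\<Sum>j\<in>{1..m}. Re (f (\<xi> j) * cnj (h (\<xi> j)))) / real m"
    unfolding dinner_def by simp
  ultimately show ?thesis
    unfolding dnorm2_def by (simp add: diff_divide_distrib add_divide_distrib)
qed

lemma dnorm2_scale: "dnorm2 m \<xi> (\<lambda>x. c * h x) = (cmod c)\<^sup>2 * dnorm2 m \<xi> h"
  unfolding dnorm2_def by (simp add: norm_mult power_mult_distrib sum_distrib_left)

lemma dinner_scale_right: "dinner m \<xi> f (\<lambda>x. c * h x) = cnj c * dinner m \<xi> f h"
  unfolding dinner_def by (simp add: sum_distrib_left mult_ac)

lemma dinner_lincomb_right:
  "dinner m \<xi> f (lincomb \<phi> J \<beta>) = (\<Sum>j\<in>J. cnj (\<beta> j) * dinner m \<xi> f (\<phi> j))"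
  unfolding dinner_def lincomb_def
  by (simp add: sum_divide_distrib sum_distrib_left sum_distrib_right mult.commute mult.left_commute
      flip: sum.swap[of _ J])

lemma dinner_lincomb_eq_0:
  assumes "\<And>j. j \<in> J \<Longrightarrow> dinner m \<xi> f (\<phi> j) = 0"
  shows "dinner m \<xi> f (lincomb \<phi> J \<beta>) = 0"
  using assms by (simp add: dinner_lincomb_right)

lemma dnorm_triangle: "dnorm m \<xi> (\<lambda>x. f x + h x) \<le> dnorm m \<xi> f + dnorm m \<xi> h"
proof -
  have L2: "dnorm m \<xi> q = L2_set (\<lambda>j. cmod (q (\<xi> j))) {1..m} / sqrt (real m)" for q
    unfolding dnorm_def L2_set_def by (simp add: real_sqrt_divide)
  have "L2_set (\<lambda>j. cmod (f (\<xi> j) + h (\<xi> j))) {1..m}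
     \<le> L2_set (\<lambda>j. cmod (f (\<xi> j)) + cmod (h (\<xi> j))) {1..m}"
    by (intro L2_set_mono norm_triangle_ineq) auto
  also have "\<dots> \<le> L2_set (\<lambda>j. cmod (f (\<xi> j))) {1..m} + L2_set (\<lambda>j. cmod (h (\<xi> j))) {1..m}"
    by (rule L2_set_triangle_ineq)
  finally have "L2_set (\<lambda>j. cmod (f (\<xi> j) + h (\<xi> j))) {1..m} / sqrt (real m)
     \<le> (L2_set (\<lambda>j. cmod (f (\<xi> j))) {1..m} + L2_set (\<lambda>j. cmod (h (\<xi> j))) {1..m}) / sqrt (real m)"
    by (rule divide_right_mono) simp
  then show ?thesis
    unfolding L2 by (simp add: add_divide_distrib)
qed

lemma dnorm_triangle_diff: "dnorm m \<xi> (\<lambda>x. f x - h x) \<le> dnorm m \<xi> f + dnorm m \<xi> h"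
proof -
  have "dnorm m \<xi> (\<lambda>x. - h x) = dnorm m \<xi> h"
    unfolding dnorm_def by simp
  with dnorm_triangle[of m \<xi> f "\<lambda>x. - h x"] show ?thesis
    by simp
qed

lemma power2_sum_le: "(x + y)\<^sup>2 \<le> 2 * x\<^sup>2 + 2 * (y::real)\<^sup>2"
  using sum_squares_bound[of x y] by (simp add: power2_eq_square algebra_simps)

lemma dnorm2_add_le: "dnorm2 m \<xi> (\<lambda>x. f x + h x) \<le> 2 * dnorm2 m \<xi> f + 2 * dnorm2 m \<xi> h"
proof -
  have "dnorm2 m \<xi> (\<lambda>x. f x + h x) \<le> (dnorm m \<xi> f + dnorm m \<xi> h)\<^sup>2"
    unfolding power2_dnorm[symmetric] by (intro power_mono dnorm_triangle dnorm_nonneg)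
  also have "\<dots> \<le> 2 * dnorm2 m \<xi> f + 2 * dnorm2 m \<xi> h"
    using power2_sum_le[of "dnorm m \<xi> f" "dnorm m \<xi> h"] by (simp add: power2_dnorm)
  finally show ?thesis .
qed

lemma dnorm2_diff_le: "dnorm2 m \<xi> (\<lambda>x. f x - h x) \<le> 2 * dnorm2 m \<xi> f + 2 * dnorm2 m \<xi> h"
  using dnorm2_add_le[of m \<xi> f "\<lambda>x. - h x"] by (simp add: dnorm2_def)

lemma lincomb_extend_zero:
  assumes "finite A" "J \<subseteq> A"
  shows "lincomb \<phi> J \<beta> = lincomb \<phi> A (\<lambda>j. if j \<in> J then \<beta> j else 0)"
  unfolding lincomb_def using assms by (intro ext sum.mono_neutral_cong_left) auto

lemma lincomb_diff: "lincomb \<phi> A \<beta>1 x - lincomb \<phi> A \<beta>2 x = lincomb \<phi> A (\<lambda>j. \<beta>1 j - \<beta>2 j) x"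
  unfolding lincomb_def by (simp add: sum_subtractf ring_distribs)

lemma lincomb_add: "lincomb \<phi> A \<beta>1 x + lincomb \<phi> A \<beta>2 x = lincomb \<phi> A (\<lambda>j. \<beta>1 j + \<beta>2 j) x"
  unfolding lincomb_def by (simp add: sum.distrib ring_distribs)

lemma lincomb_union:
  assumes "finite A" "finite B" "A \<inter> B = {}"
  shows "lincomb \<phi> (A \<union> B) \<beta> x = lincomb \<phi> A \<beta> x + lincomb \<phi> B \<beta> x"
  unfolding lincomb_def using assms by (simp add: sum.union_disjoint)

lemma lincomb_in_Sigma_terms:
  assumes "J \<subseteq> {1..N}" "card J = v"
  shows "lincomb \<phi> J \<beta> \<in> Sigma_terms \<phi> N v"
  unfolding Sigma_terms_def lincomb_def using assms by blast

lemma Sigma_termsE: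
  assumes "h \<in> Sigma_terms \<phi> N v"
  obtains J \<beta> where "J \<subseteq> {1..N}" "card J = v" "h = lincomb \<phi> J \<beta>"
  using assms unfolding Sigma_terms_def lincomb_def by blast

lemma continuous_on_lincomb:
  assumes "\<And>j. j \<in> J \<Longrightarrow> continuous_on \<Omega> (\<phi> j)"
  shows "continuous_on \<Omega> (lincomb \<phi> J \<beta>)"
  unfolding lincomb_def using assms by (intro continuous_intros) auto

section \<open>Capturing the support of a competitor\<close>

lemma obtain_sorted_enumeration:
  fixes w :: "nat \<Rightarrow> real"
  assumes "finite R"
  obtains e where "bij_betw e {..<card R} R"
    and "\<And>i j. i \<le> j \<Longrightarrow> j < card R \<Longrightarrow> w (e j) \<le> w (e i)"
proof -
  define xs where "xs = sort_key (\<lambda>j. - w j) (sorted_list_of_set R)"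
  have xs: "distinct xs" "set xs = R" "length xs = card R"
    using assms by (auto simp: xs_def)
  have sorted: "sorted (map (\<lambda>j. - w j) xs)"
    unfolding xs_def by simp
  show ?thesis
  proof
    show "bij_betw ((!) xs) {..<card R} R"
      using xs by (intro bij_betw_nth) auto
    show "w (xs ! j) \<le> w (xs ! i)" if "i \<le> j" "j < card R" for i j
      using sorted_nth_mono[OF sorted that(1)] that xs(3) by simp
  qed
qed

lemma sum_enumeration_tail:
  fixes s0 :: nat
  assumes e: "bij_betw e {..<s0} R"
  shows "(\<Sum>j\<in>R - e ` {..<min i s0}. w j) = (\<Sum>q\<in>{i..<s0}. w (e q))"
proof -
  have inj: "inj_on e {..<s0}"
    using e by (rule bij_betw_imp_inj_on)
  have "R - e ` {..<min i s0} = e ` {..<s0} - e ` {..<min i s0}"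
    using e by (simp add: bij_betw_def)
  also have "\<dots> = e ` ({..<s0} - {..<min i s0})"
    using inj by (intro inj_on_image_set_diff[symmetric]) auto
  also have "{..<s0} - {..<min i s0} = {i..<s0}"
    by auto
  finally have "R - e ` {..<min i s0} = e ` {i..<s0}" .
  moreover have "inj_on e {i..<s0}"
    using inj by (rule inj_on_subset) auto
  ultimately show ?thesis
    by (simp add: sum.reindex)
qed

lemma first_sharp_drop:
  fixes f :: "nat \<Rightarrow> real"
  assumes nonneg: "\<And>i. 0 \<le> f i" and pos: "0 < f 0" and vanish: "f n = 0" and \<epsilon>: "0 < \<epsilon>"
  obtains I where "1 \<le> I" "f I < \<epsilon> * f (I - 1)" "0 < f (I - 1)"
    and "\<And>i. 1 \<le> i \<Longrightarrow> i < I \<Longrightarrow> \<epsilon> * f (i - 1) \<le> f i"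
proof -
  let ?drop = "\<lambda>i. 1 \<le> i \<and> f i < \<epsilon> * f (i - 1)"
  have "\<exists>i. ?drop i"
  proof (rule ccontr)
    assume none: "\<nexists>i. ?drop i"
    have step: "\<epsilon> * f i \<le> f (Suc i)" for i
    proof -
      have "\<not> ?drop (Suc i)"
        using none by blast
      then show ?thesis
        by simp
    qed
    have geometric: "\<epsilon> ^ i * f 0 \<le> f i" for i
    proof (induction i)
      case (Suc i)
      then have "\<epsilon> ^ Suc i * f 0 \<le> \<epsilon> * f i"
        using \<epsilon> by (simp add: mult.assoc)
      then show ?case
        using step[of i] by simp
    qed simp
    have "0 < \<epsilon> ^ n * f 0"
      using \<epsilon> pos by simp
    then show False
      using geometric[of n] vanish by simp
  qed
  then obtain i0 where "?drop i0"
    by blast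
  define I where "I = (LEAST i. ?drop i)"
  have least: "?drop I"
    unfolding I_def by (rule LeastI) fact
  have "\<epsilon> * f (i - 1) \<le> f i" if "1 \<le> i" "i < I" for i
    using not_less_Least[OF that(2)[unfolded I_def]] that(1) by simp
  moreover have "0 < \<epsilon> * f (I - 1)"
    using least nonneg[of I] by linarith
  then have "0 < f (I - 1)"
    using \<epsilon> by (simp add: zero_less_mult_iff)
  ultimately show ?thesis
    using that[of I] least by blast
qed

lemma stage_recursion_bound:
  fixes X f :: "nat \<Rightarrow> real"
  assumes ab: "0 < a" "a \<le> b" and \<sigma>: "0 \<le> \<sigma>" and f: "\<And>i. 0 \<le> f i" and I: "1 \<le> I"
    and start: "X 0 \<le> 2 * \<sigma> + 2 * b * f 0"
    and stage: "\<And>i. i < I \<Longrightarrow> X (Suc i) \<le> 2 * \<sigma> + 2 * b * f (Suc i) + a / (64 * b) * X i"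
    and slow: "\<And>i. 1 \<le> i \<Longrightarrow> i < I \<Longrightarrow> a / (32 * b) * f (i - 1) \<le> f i"
    and sharp: "f I < a / (32 * b) * f (I - 1)"
  shows "X I \<le> 4 * \<sigma> + a / 8 * f (I - 1)"
proof -
  have b: "0 < b"
    using ab by simp
  have \<theta>: "0 \<le> a / (64 * b)"
    using ab b by simp
  have next_stage: "X (Suc i) \<le> 3 * \<sigma> + 2 * b * f (Suc i) + a / 16 * f i"
    if "i < I" "X i \<le> 4 * \<sigma> + 4 * b * f i" for i
  proof -
    have "a / (64 * b) * X i \<le> a / (64 * b) * (4 * \<sigma> + 4 * b * f i)"
      using that(2) \<theta> by (rule mult_left_mono)
    also have "\<dots> = a / (16 * b) * \<sigma> + a / 16 * f i"
      using b by (simp add: field_simps)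
    also have "a / (16 * b) * \<sigma> \<le> 1 * \<sigma>"
      using ab \<sigma> by (intro mult_right_mono) auto
    finally show ?thesis
      using stage[OF that(1)] by simp
  qed
  have invariant: "X i \<le> 4 * \<sigma> + 4 * b * f i" if "i \<le> I - 1" for i
    using that
  proof (induction i)
    case 0
    have "0 \<le> b * f 0"
      using b f by simp
    then show ?case
      using start \<sigma> by simp
  next
    case (Suc i)
    have "a / 16 * f i \<le> 2 * b * f (Suc i)"
      using slow[of "Suc i"] Suc.prems b by (simp add: field_simps)
    moreover have "i < I" "i \<le> I - 1"
      using Suc.prems by auto
    ultimately show ?case
      using next_stage[of i] Suc.IH \<sigma> by linarith
  qed
  have "2 * b * f I \<le> a / 16 * f (I - 1)"
    using sharp b by (simp add: field_simps)
  then show ?thesis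
    using next_stage[of "I - 1"] invariant[of "I - 1"] I \<sigma> by simp
qed

lemma tail_block_bound:
  fixes f :: "nat \<Rightarrow> real"
  assumes "l \<le> l'" "l < s0" and anti: "\<And>q. l \<le> q \<Longrightarrow> q < s0 \<Longrightarrow> f q \<le> f l" and nn: "0 \<le> f l"
  shows "(\<Sum>q\<in>{l..<s0}. f q) - (\<Sum>q\<in>{l'..<s0}. f q) \<le> real (l' - l) * f l"
proof -
  define r where "r = min l' s0"
  have "{l..<s0} = {l..<r} \<union> {r..<s0}"
    using assms unfolding r_def by auto
  then have "(\<Sum>q\<in>{l..<s0}. f q) = (\<Sum>q\<in>{l..<r}. f q) + (\<Sum>q\<in>{r..<s0}. f q)"
    by (simp add: sum.union_disjoint ivl_disj_int)
  moreover have "(\<Sum>q\<in>{r..<s0}. f q) = (\<Sum>q\<in>{l'..<s0}. f q)"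
    unfolding r_def by (cases "l' \<le> s0") auto
  moreover have "(\<Sum>q\<in>{l..<r}. f q) \<le> real (r - l) * f l"
    using anti sum_mono[of "{l..<r}" f "\<lambda>_. f l"] unfolding r_def by auto
  moreover have "real (r - l) * f l \<le> real (l' - l) * f l"
    using nn unfolding r_def by (intro mult_right_mono) auto
  ultimately show ?thesis
    by linarith
qed

text \<open>If the tail of a decreasingly sorted weight sequence starting at \<open>j - 1\<close> drops by a
  factor 32 at \<open>2 j - 1\<close>, then the block \<open>[j - 1, 2 j - 1)\<close> carries almost all of its mass,
  so any subset of light mass misses at least half of the \<open>j\<close> heaviest weights.\<close>
lemma light_subset_card_bound:
  fixes w :: "nat \<Rightarrow> real"
  assumes e: "bij_betw e {..<s0} R" and sorted: "\<And>i j. i \<le> j \<Longrightarrow> j < s0 \<Longrightarrow> w (e j) \<le> w (e i)"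
    and w: "\<And>j. 0 \<le> w j" and j: "1 \<le> j" "j \<le> s0"
    and drop: "32 * (\<Sum>q\<in>{2 * j - 1..<s0}. w (e q)) \<le> (\<Sum>q\<in>{j - 1..<s0}. w (e q))"
    and R': "R' \<subseteq> R" and light: "64 * (\<Sum>i\<in>R'. w i) < 26 * (\<Sum>q\<in>{j - 1..<s0}. w (e q))"
  shows "2 * card R' + j < 2 * s0"
proof -
  define T where "T = (\<Sum>q\<in>{j - 1..<s0}. w (e q))"
  define \<mu> where "\<mu> = w (e (j - 1))"
  define W where "W = e ` {..<j}"
  have finR: "finite R"
    using e bij_betw_finite by blast
  have light_nonneg: "0 \<le> (\<Sum>i\<in>R'. w i)"
    using w by (simp add: sum_nonneg)
  have "T - (\<Sum>q\<in>{2 * j - 1..<s0}. w (e q)) \<le> real (2 * j - 1 - (j - 1)) * \<mu>"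
    unfolding T_def \<mu>_def using j by (intro tail_block_bound) (auto intro: sorted w)
  then have heavy: "31 * T \<le> 32 * real j * \<mu>"
    using drop light j light_nonneg unfolding T_def by (simp add: of_nat_diff)
  have "real (card (R' \<inter> W)) * \<mu> \<le> (\<Sum>i\<in>R' \<inter> W. w i)"
    using sorted j unfolding W_def \<mu>_def by (intro sum_bounded_below) auto
  also have "\<dots> \<le> (\<Sum>i\<in>R'. w i)"
    using finR R' w by (intro sum_mono2) (auto intro: finite_subset)
  finally have "real (card (R' \<inter> W)) * \<mu> \<le> (\<Sum>i\<in>R'. w i)" .
  moreover have "0 < real j * \<mu>"
    using light heavy light_nonneg unfolding T_def by linarith
  ultimately have "2 * (real (card (R' \<inter> W)) * \<mu>) < real j * \<mu>"
    using light heavy unfolding T_def by linarith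
  moreover have "0 < \<mu>"
    using \<open>0 < real j * \<mu>\<close> by (simp add: zero_less_mult_iff)
  ultimately have half: "2 * card (R' \<inter> W) < j"
    by (simp flip: of_nat_less_iff)
  have "card R' \<le> card (R' \<inter> W) + card (R' - W)"
    by (metis Int_Diff_Un card_Un_le)
  moreover have "card (R' - W) \<le> card (R - W)"
    using R' finR by (intro card_mono) auto
  moreover have "card (R - W) = s0 - j"
  proof -
    have "W \<subseteq> R" "card W = j"
      using e j unfolding W_def bij_betw_def by (auto simp: card_image inj_on_subset)
    moreover have "card R = s0"
      using bij_betw_same_card[OF e] by simp
    ultimately show ?thesis
      using finR by (simp add: card_Diff_subset finite_subset)
  qed
  ultimately show ?thesis
    using half j by linarith
qed

text \<open>An abstract form of the support-capturing argument: \<open>E k\<close> is the error after \<open>k\<close> steps and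
  \<open>R k\<close> the part of the support of a fixed competitor not yet captured, carrying weights \<open>w\<close>.\<close>
locale capture_dynamics =
  fixes E :: "nat \<Rightarrow> real" and R :: "nat \<Rightarrow> nat set" and w :: "nat \<Rightarrow> real"
    and a b \<sigma> :: real and c K :: nat
  assumes ab: "0 < a" "a \<le> b" and \<sigma>_nonneg: "0 \<le> \<sigma>" and w_nonneg: "\<And>j. 0 \<le> w j"
    and finite_R: "\<And>k. finite (R k)" and R_antimono: "\<And>k k'. k \<le> k' \<Longrightarrow> R k' \<subseteq> R k"
    and E_antimono: "\<And>k k'. k \<le> k' \<Longrightarrow> E k' \<le> E k"
    and mass_le_E: "\<And>k. k \<le> K \<Longrightarrow> a * (\<Sum>j\<in>R k. w j) \<le> 2 * E k + 2 * \<sigma>"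
    and E_le_mass: "\<And>k. k \<le> K \<Longrightarrow> E k \<le> 2 * \<sigma> + 2 * b * (\<Sum>j\<in>R k. w j)"
    and E_after_capture: "\<And>k0 U n. U \<subseteq> R k0 \<Longrightarrow> c * card U \<le> n \<Longrightarrow> k0 + n \<le> K \<Longrightarrow>
      E (k0 + n) \<le> 2 * \<sigma> + 2 * b * (\<Sum>j\<in>R k0 - U. w j) + a / (64 * b) * E k0"
begin

lemma b_pos: "0 < b"
  using ab by simp

lemma E_after_stage:
  assumes "k \<le> k0" "finite U" "card U \<le> n" "k0 + c * n \<le> K"
  shows "E (k0 + c * n) \<le> 2 * \<sigma> + 2 * b * (\<Sum>j\<in>R k - U. w j) + a / (64 * b) * E k0"
proof -
  have "card (U \<inter> R k0) \<le> n"
    using assms(2,3) card_mono[of U "U \<inter> R k0"] by auto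
  then have "c * card (U \<inter> R k0) \<le> c * n"
    by simp
  then have "E (k0 + c * n) \<le> 2 * \<sigma> + 2 * b * (\<Sum>j\<in>R k0 - U \<inter> R k0. w j) + a / (64 * b) * E k0"
    using assms(4) by (intro E_after_capture) auto
  moreover have "(\<Sum>j\<in>R k0 - U \<inter> R k0. w j) \<le> (\<Sum>j\<in>R k - U. w j)"
    using R_antimono[OF assms(1)] finite_R w_nonneg by (intro sum_mono2) auto
  then have "2 * b * (\<Sum>j\<in>R k0 - U \<inter> R k0. w j) \<le> 2 * b * (\<Sum>j\<in>R k - U. w j)"
    using b_pos by simp
  ultimately show ?thesis
    by linarith
qed

lemma E_after_dyadic_stages:
  fixes e :: "nat \<Rightarrow> nat" and k I :: nat
  defines "tail \<equiv> \<lambda>i. \<Sum>q\<in>{2 ^ i - 1..<card (R k)}. w (e q)"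
  assumes e: "bij_betw e {..<card (R k)} (R k)" and I: "1 \<le> I"
    and slow: "\<And>i. 1 \<le> i \<Longrightarrow> i < I \<Longrightarrow> a / (32 * b) * tail (i - 1) \<le> tail i"
    and sharp: "tail I < a / (32 * b) * tail (I - 1)"
    and budget: "k + c * (2 ^ Suc I - 2) \<le> K"
  shows "E (k + c * (2 ^ Suc I - 2)) \<le> 4 * \<sigma> + a / 8 * tail (I - 1)"
proof -
  define KK where "KK i = k + c * (2 ^ Suc i - 2)" for i :: nat
  define U where "U i = e ` {..<min (2 ^ i - 1) (card (R k))}" for i :: nat
  have captured: "(\<Sum>j\<in>R k - U i. w j) = tail i" for i
    unfolding U_def tail_def by (rule sum_enumeration_tail[OF e])
  have KK_Suc: "KK (Suc i) = KK i + c * 2 ^ Suc i" for i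
  proof -
    have double: "(2::nat) ^ Suc (Suc i) - 2 = (2 ^ Suc i - 2) + 2 ^ Suc i"
      using one_less_power[of 2 "Suc i"] by simp
    show ?thesis
      unfolding KK_def double add_mult_distrib2 by (simp only: add.assoc)
  qed
  have KK_mono: "KK i \<le> KK i'" if "i \<le> i'" for i i'
    unfolding KK_def using that by (intro add_left_mono mult_le_mono2 diff_le_mono power_increasing) auto
  have stage: "E (KK (Suc i)) \<le> 2 * \<sigma> + 2 * b * tail (Suc i) + a / (64 * b) * E (KK i)" if "i < I" for i
  proof -
    have "card (U (Suc i)) \<le> 2 ^ Suc i"
      unfolding U_def using card_image_le[of "{..<min (2 ^ Suc i - 1) (card (R k))}" e]
      by (simp; linarith)
    moreover have "KK i + c * 2 ^ Suc i \<le> K"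
      using KK_Suc[of i] KK_mono[of "Suc i" I] that budget by (simp add: KK_def)
    ultimately show ?thesis
      using E_after_stage[of k "KK i" "U (Suc i)" "2 ^ Suc i"] KK_mono[of 0 i]
      unfolding KK_Suc captured by (simp add: U_def KK_def)
  qed
  have "tail i \<ge> 0" for i
    unfolding tail_def using w_nonneg by (simp add: sum_nonneg)
  moreover have "E (KK 0) \<le> 2 * \<sigma> + 2 * b * tail 0"
    using E_le_mass[of k] budget captured[of 0] by (simp add: KK_def U_def)
  ultimately have "E (KK I) \<le> 4 * \<sigma> + a / 8 * tail (I - 1)"
    by (intro stage_recursion_bound[OF ab \<sigma>_nonneg _ I _ stage slow sharp])
  then show ?thesis
    unfolding KK_def .
qed

lemma mass_small_after_stages:
  assumes "k \<le> K" "E k \<le> 4 * \<sigma> + a / 8 * T" "\<not> a * T \<le> 64 * \<sigma>"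
  shows "64 * (\<Sum>j\<in>R k. w j) < 26 * T"
proof -
  have "a * (\<Sum>j\<in>R k. w j) \<le> 10 * \<sigma> + a / 4 * T"
    using mass_le_E[OF assms(1)] assms(2) by simp
  then have "a * (64 * (\<Sum>j\<in>R k. w j)) < a * (26 * T)"
    using assms(3) by (simp add: algebra_simps)
  then show ?thesis
    using ab by simp
qed

text \<open>Proof by induction on a bound \<open>s\<close> for the uncaptured support. Sorting its weights, the
  tails at the positions \<open>2^i - 1\<close> either stay comparable or drop sharply at a first index \<open>I\<close>.
  Running stages of length \<open>c 2^(i+1)\<close> brings the error down to the tail mass before that drop;
  then either the error is already small, or more than half of the \<open>2^(I-1)\<close> heaviest indices
  have been captured and the induction hypothesis applies to a smaller support.\<close>
theorem E_le_after_budget: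
  "card (R k) \<le> s \<Longrightarrow> k + 8 * c * s \<le> K \<Longrightarrow> E (k + 8 * c * s) \<le> 12 * \<sigma>"
proof (induction s arbitrary: k rule: less_induct)
  case (less s)
  show ?case
  proof (cases "2 * b * (\<Sum>j\<in>R k. w j) \<le> 10 * \<sigma>")
    case True
    then have "E k \<le> 12 * \<sigma>"
      using E_le_mass[of k] less.prems by linarith
    then show ?thesis
      using E_antimono[of k "k + 8 * c * s"] by simp
  next
    case False
    define s0 where "s0 = card (R k)"
    obtain e where e: "bij_betw e {..<s0} (R k)"
      and sorted: "\<And>i j. i \<le> j \<Longrightarrow> j < s0 \<Longrightarrow> w (e j) \<le> w (e i)"
      using obtain_sorted_enumeration[OF finite_R[of k], of w] unfolding s0_def by blast
    define tt where "tt i = (\<Sum>q\<in>{2 ^ i - 1..<s0}. w (e q))" for i :: nat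
    have tt_nonneg: "0 \<le> tt i" for i
      unfolding tt_def using w_nonneg by (simp add: sum_nonneg)
    have "tt 0 = (\<Sum>j\<in>R k. w j)"
      using sum_enumeration_tail[OF e, where i = 0 and w = w] unfolding tt_def by simp
    then have "0 < b * tt 0"
      using False \<sigma>_nonneg by simp
    then have tt_pos: "0 < tt 0"
      using b_pos by (simp add: zero_less_mult_iff)
    have "s0 \<le> 2 ^ s0 - 1"
      using less_exp[of s0] by linarith
    then have tt_vanish: "tt s0 = 0"
      unfolding tt_def by simp
    have \<epsilon>_pos: "0 < a / (32 * b)"
      using ab b_pos by simp
    obtain I where I: "1 \<le> I" and sharp: "tt I < a / (32 * b) * tt (I - 1)"
      and tt_I_pos: "0 < tt (I - 1)"
      and slow: "\<And>i. 1 \<le> i \<Longrightarrow> i < I \<Longrightarrow> a / (32 * b) * tt (i - 1) \<le> tt i"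
      using first_sharp_drop[OF tt_nonneg tt_pos tt_vanish \<epsilon>_pos] by metis
    define j where "j = (2::nat) ^ (I - 1)"
    define k' where "k' = k + c * (2 ^ Suc I - 2)"
    have pow_I: "(2::nat) ^ I = 2 * j" "(2::nat) ^ Suc I = 4 * j"
      using I unfolding j_def by (cases I; simp)+
    have j: "1 \<le> j" "j \<le> s0"
    proof -
      show "1 \<le> j"
        unfolding j_def by simp
      show "j \<le> s0"
      proof (rule ccontr)
        assume "\<not> j \<le> s0"
        then have "tt (I - 1) = 0"
          unfolding tt_def j_def by simp
        then show False
          using tt_I_pos by simp
      qed
    qed
    have k'_le: "k' \<le> k + 4 * c * j"
      unfolding k'_def pow_I by simp
    have "4 * c * j \<le> 8 * c * s"
      using j less.prems(1) unfolding s0_def by (intro mult_le_mono) auto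
    then have k'_budget: "k' \<le> k + 8 * c * s"
      using k'_le by linarith
    have "k' \<le> K"
      using k'_budget less.prems(2) by linarith
    then have final: "E k' \<le> 4 * \<sigma> + a / 8 * tt (I - 1)"
      using E_after_dyadic_stages[of e k I] e I slow sharp unfolding k'_def tt_def s0_def by simp
    show ?thesis
    proof (cases "a * tt (I - 1) \<le> 64 * \<sigma>")
      case True
      then show ?thesis
        using final E_antimono[OF k'_budget] by simp
    next
      case False
      define R' where "R' = R k'"
      have light: "64 * (\<Sum>i\<in>R'. w i) < 26 * tt (I - 1)"
        using mass_small_after_stages[OF \<open>k' \<le> K\<close> final] False unfolding R'_def by simp
      have "a / (32 * b) * tt (I - 1) \<le> 1 / 32 * tt (I - 1)"
        using ab tt_nonneg by (intro mult_right_mono) (auto simp: field_simps)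
      then have drop: "32 * tt I \<le> tt (I - 1)"
        using sharp by simp
      have "R' \<subseteq> R k"
        unfolding R'_def k'_def using R_antimono by simp
      then have shrink: "2 * card R' + j < 2 * s0"
        using light_subset_card_bound[where w = w, OF e sorted w_nonneg j] drop light
        unfolding tt_def pow_I j_def[symmetric] by (simp add: j_def)
      have "k' + 8 * c * card R' \<le> k + 8 * c * s"
      proof -
        have "4 * c * j + 8 * c * card R' = 4 * c * (j + 2 * card R')"
          by (simp add: algebra_simps)
        also have "\<dots> \<le> 4 * c * (2 * s)"
          using shrink less.prems(1) unfolding s0_def by (intro mult_le_mono2) linarith
        finally show ?thesis
          using k'_le by linarith
      qed
      moreover have "card R' < s"
        using shrink less.prems(1) unfolding s0_def by linarith
      ultimately have "E (k' + 8 * c * card R') \<le> 12 * \<sigma>"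
        using less.IH less.prems(2) unfolding R'_def by simp
      then show ?thesis
        using E_antimono[OF \<open>k' + 8 * c * card R' \<le> k + 8 * c * s\<close>] by simp
    qed
  qed
qed

end

section \<open>Weak orthogonal matching pursuit under a discrete restricted isometry\<close>

lemma contraction_to_floor:
  fixes E :: "nat \<Rightarrow> real"
  assumes mono: "\<And>i. i < n \<Longrightarrow> E (Suc i) \<le> E i"
    and step: "\<And>i. i < n \<Longrightarrow> \<gamma> * (E i - B) \<le> L * (E i - E (Suc i))"
    and pos: "0 < \<gamma>" "0 < L" "0 \<le> B" "0 \<le> E 0"
  shows "E n \<le> B + E 0 / (1 + real n * \<gamma> / L)"
proof -
  define P where "P i = max (E i - B) 0" for i
  define q where "q = 1 + \<gamma> / L"
  have q1: "1 \<le> q"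
    using pos by (simp add: q_def)
  have contract: "P (Suc i) * q \<le> P i" if "i < n" for i
  proof (cases "E (Suc i) \<le> B")
    case False
    have "(E (Suc i) - B) * \<gamma> \<le> (E i - B) * \<gamma>"
      using mono[OF that] pos by (simp add: mult_right_mono)
    also have "\<dots> \<le> L * (E i - E (Suc i))"
      using step[OF that] by (simp add: mult.commute)
    finally have "(E (Suc i) - B) * q \<le> E i - B"
      using pos by (simp add: q_def field_simps)
    then show ?thesis
      using False mono[OF that] unfolding P_def by simp
  qed (simp add: P_def)
  have decay: "P i * q ^ i \<le> P 0" if "i \<le> n" for i
    using that
  proof (induction i)
    case (Suc i)
    have "P (Suc i) * q ^ Suc i \<le> P i * q ^ i"
      using contract[of i] Suc.prems q1 by (simp add: mult.assoc[symmetric] mult_right_mono)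
    then show ?case
      using Suc by simp
  qed simp
  have "0 < \<gamma> / L"
    using pos by simp
  then have "- 1 \<le> \<gamma> / L"
    by linarith
  then have "1 + real n * \<gamma> / L \<le> q ^ n"
    unfolding q_def using Bernoulli_inequality[of "\<gamma> / L" n] by simp
  then have "P n * (1 + real n * \<gamma> / L) \<le> P n * q ^ n"
    by (simp add: P_def mult_left_mono)
  also have "\<dots> \<le> P 0"
    by (rule decay) simp
  also have "\<dots> \<le> E 0"
    using pos by (simp add: P_def)
  finally have "P n \<le> E 0 / (1 + real n * \<gamma> / L)"
    using pos by (simp add: pos_le_divide_eq add_pos_nonneg)
  then show ?thesis
    unfolding P_def by simp
qed

lemma quadratic_gain_bound:
  fixes a c M Q D :: real
  assumes "0 < a" "0 \<le> c" "0 \<le> Q" "0 \<le> D" and QD: "a * Q\<^sup>2 \<le> c * D"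
  shows "a * (2 * (M * Q) - D) \<le> c * M\<^sup>2"
proof (cases "D = 0")
  case True
  then have "Q = 0"
    using assms by (simp add: mult_le_0_iff)
  then show ?thesis
    using True assms by simp
next
  case False
  then have D: "0 < D"
    using assms by simp
  have "a * (2 * (M * Q) - D) \<le> a * M\<^sup>2 * Q\<^sup>2 / D"
  proof -
    have "0 \<le> a * (M * Q - D)\<^sup>2 / D"
      using assms D by simp
    then show ?thesis
      using D by (simp add: field_simps power2_eq_square)
  qed
  also have "\<dots> \<le> c * M\<^sup>2"
    using mult_right_mono[OF QD, of "M\<^sup>2"] D by (simp add: field_simps)
  finally show ?thesis .
qed

locale womp_rip =
  fixes m :: nat and \<xi> :: "nat \<Rightarrow> 'a" and \<phi> :: "nat \<Rightarrow> 'a \<Rightarrow> complex" and N u :: nat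
    and t a b :: real and f0 :: "'a \<Rightarrow> complex" and g :: "nat \<Rightarrow> nat" and F :: "nat \<Rightarrow> 'a \<Rightarrow> complex"
  assumes dnorm2_dict_le_1: "\<And>j. j \<in> {1..N} \<Longrightarrow> dnorm2 m \<xi> (\<phi> j) \<le> 1"
    and rip_lower: "\<And>J \<beta>. J \<subseteq> {1..N} \<Longrightarrow> card J \<le> u \<Longrightarrow>
      a * (\<Sum>j\<in>J. (cmod (\<beta> j))\<^sup>2) \<le> dnorm2 m \<xi> (lincomb \<phi> J \<beta>)"
    and rip_upper: "\<And>J \<beta>. J \<subseteq> {1..N} \<Longrightarrow> card J \<le> u \<Longrightarrow>
      dnorm2 m \<xi> (lincomb \<phi> J \<beta>) \<le> b * (\<Sum>j\<in>J. (cmod (\<beta> j))\<^sup>2)"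
    and run: "womp_run m \<xi> \<phi> N t f0 g F"
    and t_pos: "0 < t" and a_pos: "0 < a" and a_le_b: "a \<le> b" and N_pos: "0 < N"
begin

definition chosen :: "nat \<Rightarrow> nat set" where
  "chosen k = g ` {1..k}"

abbreviation err :: "nat \<Rightarrow> real" where
  "err k \<equiv> dnorm2 m \<xi> (F k)"

definition max_corr :: "nat \<Rightarrow> real" where
  "max_corr k = Max ((\<lambda>j. cmod (dinner m \<xi> (F k) (\<phi> j))) ` {1..N})"

lemma chosen_subset: "chosen k \<subseteq> {1..N}"
  using run unfolding chosen_def womp_run_def by auto

lemma finite_chosen: "finite (chosen k)"
  unfolding chosen_def by simp

lemma card_chosen_le: "card (chosen k) \<le> k"
  unfolding chosen_def using card_image_le[of "{1..k}" g] by simp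

lemma chosen_mono: "k \<le> k' \<Longrightarrow> chosen k \<subseteq> chosen k'"
  unfolding chosen_def by auto

lemma chosen_Suc: "chosen (Suc k) = insert (g (Suc k)) (chosen k)"
  unfolding chosen_def by (auto simp: atLeastAtMostSuc_conv)

lemma residual_eq_lincomb:
  obtains \<gamma> where "F k = (\<lambda>x. f0 x - lincomb \<phi> (chosen k) \<gamma> x)"
proof -
  obtain c where c: "F k = (\<lambda>x. f0 x - (\<Sum>i\<in>{1..k}. c i * \<phi> (g i) x))"
    using run unfolding womp_run_def by blast
  have "(\<Sum>i\<in>{1..k}. c i * \<phi> (g i) x)
      = (\<Sum>j\<in>g ` {1..k}. (\<Sum>i\<in>{i\<in>{1..k}. g i = j}. c i) * \<phi> j x)" for x
    by (subst sum.image_gen[of "{1..k}" _ g]) (auto simp: sum_distrib_right intro!: sum.cong)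
  then show ?thesis
    using c that[of "\<lambda>j. \<Sum>i\<in>{i\<in>{1..k}. g i = j}. c i"] by (simp add: lincomb_def chosen_def)
qed

lemma residual_orth: "j \<in> chosen k \<Longrightarrow> dinner m \<xi> (F k) (\<phi> j) = 0"
  using run unfolding womp_run_def chosen_def by auto

lemma err_le_approx:
  assumes "J \<subseteq> chosen k"
  shows "err k \<le> dnorm2 m \<xi> (\<lambda>x. f0 x - lincomb \<phi> J \<beta> x)"
proof -
  obtain \<gamma> where \<gamma>: "F k = (\<lambda>x. f0 x - lincomb \<phi> (chosen k) \<gamma> x)"
    by (rule residual_eq_lincomb)
  define \<beta>' where "\<beta>' = (\<lambda>j. if j \<in> J then \<beta> j else 0)"
  have "lincomb \<phi> J \<beta> = lincomb \<phi> (chosen k) \<beta>'"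
    unfolding \<beta>'_def using finite_chosen assms by (rule lincomb_extend_zero)
  then have "(\<lambda>x. f0 x - lincomb \<phi> J \<beta> x) = (\<lambda>x. F k x - lincomb \<phi> (chosen k) (\<lambda>j. \<beta>' j - \<gamma> j) x)"
    unfolding \<gamma> by (auto simp flip: lincomb_diff)
  then show ?thesis
    using dinner_lincomb_eq_0[OF residual_orth] dnorm2_nonneg by (simp add: dnorm2_diff)
qed

lemma err_Suc_le: "err (Suc k) \<le> err k"
proof -
  obtain \<gamma> where "F k = (\<lambda>x. f0 x - lincomb \<phi> (chosen k) \<gamma> x)"
    by (rule residual_eq_lincomb)
  then show ?thesis
    using err_le_approx[of "chosen k" "Suc k" \<gamma>] chosen_mono[of k "Suc k"] by simp
qed

lemma err_antimono: "k \<le> k' \<Longrightarrow> err k' \<le> err k"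
  by (induction k' rule: dec_induct) (use err_Suc_le order_trans in blast)+

lemma max_corr_ge: "j \<in> {1..N} \<Longrightarrow> cmod (dinner m \<xi> (F k) (\<phi> j)) \<le> max_corr k"
  unfolding max_corr_def by (rule Max_ge) auto

lemma max_corr_nonneg: "0 \<le> max_corr k"
  by (rule order_trans[OF norm_ge_zero max_corr_ge[of 1]]) (use N_pos in simp)

lemma weak_greedy_choice: "t * max_corr k \<le> cmod (dinner m \<xi> (F k) (\<phi> (g (Suc k))))"
  using run unfolding womp_run_def max_corr_def by (metis diff_Suc_1 le_add1 plus_1_eq_Suc)

text \<open>The residual is orthogonal to the chosen elements, so adding the new element with
  coefficient equal to its correlation is a competitor for the next projection.\<close>
lemma err_Suc_le_corr: "err (Suc k) \<le> err k - (cmod (dinner m \<xi> (F k) (\<phi> (g (Suc k)))))\<^sup>2"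
proof -
  define \<iota> where "\<iota> = dinner m \<xi> (F k) (\<phi> (g (Suc k)))"
  define p where "p = g (Suc k)"
  obtain \<gamma> where \<gamma>: "F k = (\<lambda>x. f0 x - lincomb \<phi> (chosen k) \<gamma> x)"
    by (rule residual_eq_lincomb)
  define \<beta> where "\<beta> = (\<lambda>j. (if j \<in> chosen k then \<gamma> j else 0) + (if j = p then \<iota> else 0))"
  have old: "lincomb \<phi> (chosen k) \<gamma> = lincomb \<phi> (chosen (Suc k)) (\<lambda>j. if j \<in> chosen k then \<gamma> j else 0)"
    using lincomb_extend_zero[OF finite_chosen chosen_mono[of k "Suc k"]] by simp
  have new: "lincomb \<phi> (chosen (Suc k)) (\<lambda>j. if j = p then \<iota> else 0) x = \<iota> * \<phi> p x" for x
    unfolding lincomb_def using finite_chosen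
    by (simp add: if_distrib[of "\<lambda>c. c * _"] chosen_Suc p_def cong: if_cong)
  have eq: "(\<lambda>x. f0 x - lincomb \<phi> (chosen (Suc k)) \<beta> x) = (\<lambda>x. F k x - \<iota> * \<phi> p x)"
    unfolding \<beta>_def \<gamma> by (auto simp: old new simp flip: lincomb_add)
  have "err (Suc k) \<le> dnorm2 m \<xi> (\<lambda>x. f0 x - lincomb \<phi> (chosen (Suc k)) \<beta> x)"
    by (rule err_le_approx) simp
  also have "\<dots> = err k - 2 * Re (cnj \<iota> * \<iota>) + (cmod \<iota>)\<^sup>2 * dnorm2 m \<xi> (\<phi> p)"
    unfolding eq dnorm2_diff dinner_scale_right dnorm2_scale by (simp add: \<iota>_def p_def)
  also have "\<dots> \<le> err k - (cmod \<iota>)\<^sup>2"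
  proof -
    have "Re (cnj \<iota> * \<iota>) = (cmod \<iota>)\<^sup>2"
      unfolding cmod_power2 by (simp add: power2_eq_square)
    moreover have "dnorm2 m \<xi> (\<phi> p) \<le> 1"
      using dnorm2_dict_le_1 run unfolding womp_run_def p_def by auto
    ultimately show ?thesis
      using mult_left_mono[of "dnorm2 m \<xi> (\<phi> p)" 1 "(cmod \<iota>)\<^sup>2"] by simp
  qed
  finally show ?thesis
    unfolding \<iota>_def .
qed

lemma residual_diff_approx:
  assumes "finite J"
  obtains \<delta> where "\<And>y. F k y - (f0 y - lincomb \<phi> J \<zeta> y) = lincomb \<phi> (J \<union> chosen k) \<delta> y"
    and "\<And>j. j \<in> J - chosen k \<Longrightarrow> \<delta> j = \<zeta> j"
proof -
  let ?A = "J \<union> chosen k"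
  obtain \<gamma> where \<gamma>: "F k = (\<lambda>x. f0 x - lincomb \<phi> (chosen k) \<gamma> x)"
    by (rule residual_eq_lincomb)
  have finA: "finite ?A"
    using assms finite_chosen by simp
  have "lincomb \<phi> J \<zeta> = lincomb \<phi> ?A (\<lambda>j. if j \<in> J then \<zeta> j else 0)"
    "lincomb \<phi> (chosen k) \<gamma> = lincomb \<phi> ?A (\<lambda>j. if j \<in> chosen k then \<gamma> j else 0)"
    using finA by (auto intro: lincomb_extend_zero)
  then show ?thesis
    using that[of "\<lambda>j. (if j \<in> J then \<zeta> j else 0) - (if j \<in> chosen k then \<gamma> j else 0)"]
    unfolding \<gamma> by (simp add: lincomb_diff)
qed

text \<open>Expand the competitor around \<open>F k\<close>: the cross term is bounded by Cauchy-Schwarz against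
  the maximal correlation, the quadratic term from below by the restricted isometry.\<close>
lemma err_gain_le_max_corr:
  assumes J: "J \<subseteq> {1..N}" and card: "card (J \<union> chosen k) \<le> u"
  shows "a * (err k - dnorm2 m \<xi> (\<lambda>x. f0 x - lincomb \<phi> J \<zeta> x))
    \<le> real (card (J - chosen k)) * (max_corr k)\<^sup>2"
proof -
  let ?A = "J \<union> chosen k" and ?R = "J - chosen k"
  have finJ: "finite J"
    using J finite_subset by blast
  obtain \<delta> where \<delta>: "\<And>x. F k x - (f0 x - lincomb \<phi> J \<zeta> x) = lincomb \<phi> ?A \<delta> x"
    and "\<And>j. j \<in> J - chosen k \<Longrightarrow> \<delta> j = \<zeta> j"
    using residual_diff_approx[OF finJ, where k = k and \<zeta> = \<zeta>] by blast
  define d where "d = lincomb \<phi> ?A \<delta>"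
  have "(\<lambda>x. f0 x - lincomb \<phi> J \<zeta> x) = (\<lambda>x. F k x - d x)"
    using \<delta> unfolding d_def by (auto simp: algebra_simps)
  then have expand: "dnorm2 m \<xi> (\<lambda>x. f0 x - lincomb \<phi> J \<zeta> x)
      = err k - 2 * Re (dinner m \<xi> (F k) d) + dnorm2 m \<xi> d"
    by (simp add: dnorm2_diff)
  define Q where "Q = (\<Sum>j\<in>?R. cmod (\<delta> j))"
  have cross: "Re (dinner m \<xi> (F k) d) \<le> max_corr k * Q"
  proof -
    have "dinner m \<xi> (F k) d = (\<Sum>j\<in>?R. cnj (\<delta> j) * dinner m \<xi> (F k) (\<phi> j))"
      unfolding d_def dinner_lincomb_right using finJ finite_chosen residual_orth
      by (intro sum.mono_neutral_right) auto
    then have "cmod (dinner m \<xi> (F k) d) \<le> (\<Sum>j\<in>?R. cmod (\<delta> j) * max_corr k)"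
      using J by (auto simp: norm_mult subset_iff intro!: order_trans[OF norm_sum] sum_mono mult_left_mono max_corr_ge)
    moreover have "(\<Sum>j\<in>?R. cmod (\<delta> j) * max_corr k) = max_corr k * Q"
      unfolding Q_def by (simp add: sum_distrib_left mult.commute)
    ultimately show ?thesis
      using complex_Re_le_cmod[of "dinner m \<xi> (F k) d"] by linarith
  qed
  have "a * Q\<^sup>2 \<le> real (card ?R) * dnorm2 m \<xi> d"
  proof -
    have "Q\<^sup>2 \<le> (\<Sum>j\<in>?R. (cmod (\<delta> j))\<^sup>2) * real (card ?R)"
      unfolding Q_def by (rule sum_squared_le_sum_of_squares)
    also have "\<dots> \<le> (\<Sum>j\<in>?A. (cmod (\<delta> j))\<^sup>2) * real (card ?R)"
      using finJ finite_chosen by (intro mult_right_mono sum_mono2) auto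
    finally have "a * Q\<^sup>2 \<le> real (card ?R) * (a * (\<Sum>j\<in>?A. (cmod (\<delta> j))\<^sup>2))"
      using a_pos by (simp add: mult_left_mono mult_ac)
    also have "\<dots> \<le> real (card ?R) * dnorm2 m \<xi> d"
      unfolding d_def using J chosen_subset card by (intro mult_left_mono rip_lower) auto
    finally show ?thesis .
  qed
  then have "a * (2 * (max_corr k * Q) - dnorm2 m \<xi> d) \<le> real (card ?R) * (max_corr k)\<^sup>2"
    using a_pos dnorm2_nonneg by (intro quadratic_gain_bound) (auto simp: Q_def intro: sum_nonneg)
  moreover have "a * (err k - dnorm2 m \<xi> (\<lambda>x. f0 x - lincomb \<phi> J \<zeta> x))
      \<le> a * (2 * (max_corr k * Q) - dnorm2 m \<xi> d)"
    using cross a_pos unfolding expand by (intro mult_left_mono) auto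
  ultimately show ?thesis
    by linarith
qed

lemma err_gain_le_err_decrease:
  assumes "J \<subseteq> {1..N}" "card (J \<union> chosen k) \<le> u"
  shows "a * t\<^sup>2 * (err k - dnorm2 m \<xi> (\<lambda>x. f0 x - lincomb \<phi> J \<zeta> x))
    \<le> real (card (J - chosen k)) * (err k - err (Suc k))"
proof -
  have "(t * max_corr k)\<^sup>2 \<le> (cmod (dinner m \<xi> (F k) (\<phi> (g (Suc k)))))\<^sup>2"
    using weak_greedy_choice t_pos max_corr_nonneg by (intro power_mono) auto
  then have "t\<^sup>2 * (max_corr k)\<^sup>2 \<le> err k - err (Suc k)"
    using err_Suc_le_corr[of k] by (simp add: power_mult_distrib)
  then have "real (card (J - chosen k)) * (t\<^sup>2 * (max_corr k)\<^sup>2)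
      \<le> real (card (J - chosen k)) * (err k - err (Suc k))"
    by (simp add: mult_left_mono)
  moreover have "t\<^sup>2 * (a * (err k - dnorm2 m \<xi> (\<lambda>x. f0 x - lincomb \<phi> J \<zeta> x)))
      \<le> t\<^sup>2 * (real (card (J - chosen k)) * (max_corr k)\<^sup>2)"
    by (intro mult_left_mono err_gain_le_max_corr assms) simp
  ultimately show ?thesis
    by (simp add: mult_ac)
qed

lemma err_after_substage:
  assumes J: "J \<subseteq> {1..N}" "J \<subseteq> U \<union> chosen k0" and U: "finite U" "U \<noteq> {}"
    and card: "\<And>k. k0 \<le> k \<Longrightarrow> k < k0 + n \<Longrightarrow> card (J \<union> chosen k) \<le> u"
  shows "err (k0 + n) \<le> dnorm2 m \<xi> (\<lambda>x. f0 x - lincomb \<phi> J \<zeta> x)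
    + err k0 / (1 + real n * (a * t\<^sup>2) / real (card U))"
proof -
  define B where "B = dnorm2 m \<xi> (\<lambda>x. f0 x - lincomb \<phi> J \<zeta> x)"
  have "a * t\<^sup>2 * (err (k0 + i) - B) \<le> real (card U) * (err (k0 + i) - err (k0 + Suc i))"
    if "i < n" for i
  proof -
    have "J - chosen (k0 + i) \<subseteq> U"
      using J chosen_mono[of k0 "k0 + i"] by auto
    then have "real (card (J - chosen (k0 + i))) \<le> real (card U)"
      using U by (simp add: card_mono)
    moreover have "0 \<le> err (k0 + i) - err (k0 + Suc i)"
      using err_Suc_le[of "k0 + i"] by simp
    ultimately have "real (card (J - chosen (k0 + i))) * (err (k0 + i) - err (k0 + Suc i))
        \<le> real (card U) * (err (k0 + i) - err (k0 + Suc i))"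
      by (rule mult_right_mono)
    moreover have "card (J \<union> chosen (k0 + i)) \<le> u"
      using card that by simp
    ultimately show ?thesis
      using err_gain_le_err_decrease[OF J(1), of "k0 + i" \<zeta>] unfolding B_def by simp
  qed
  moreover have "0 < real (card U)"
    using U by (simp add: card_gt_0_iff)
  ultimately have "err (k0 + n) \<le> B + err (k0 + 0) / (1 + real n * (a * t\<^sup>2) / real (card U))"
    using a_pos t_pos err_Suc_le dnorm2_nonneg
    by (intro contraction_to_floor[where E = "\<lambda>i. err (k0 + i)"]) (auto simp: B_def)
  then show ?thesis
    unfolding B_def by simp
qed

lemma dnorm2_approx_restrict_le:
  assumes T: "T \<subseteq> {1..N}" "card T \<le> u"
  shows "dnorm2 m \<xi> (\<lambda>y. f0 y - lincomb \<phi> (T \<inter> A) x y)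
    \<le> 2 * dnorm2 m \<xi> (\<lambda>y. f0 y - lincomb \<phi> T x y) + 2 * b * (\<Sum>j\<in>T - A. (cmod (x j))\<^sup>2)"
proof -
  have finT: "finite T"
    using T finite_subset by blast
  have "T \<inter> A \<inter> (T - A) = {}"
    by blast
  then have "lincomb \<phi> T x y = lincomb \<phi> (T \<inter> A) x y + lincomb \<phi> (T - A) x y" for y
    using finT lincomb_union[of "T \<inter> A" "T - A" \<phi> x y] by (simp add: Int_Diff_Un)
  then have "dnorm2 m \<xi> (\<lambda>y. f0 y - lincomb \<phi> (T \<inter> A) x y)
      = dnorm2 m \<xi> (\<lambda>y. (f0 y - lincomb \<phi> T x y) + lincomb \<phi> (T - A) x y)"
    by (simp add: algebra_simps)
  also have "\<dots> \<le> 2 * dnorm2 m \<xi> (\<lambda>y. f0 y - lincomb \<phi> T x y) + 2 * dnorm2 m \<xi> (lincomb \<phi> (T - A) x)"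
    by (rule dnorm2_add_le)
  also have "dnorm2 m \<xi> (lincomb \<phi> (T - A) x) \<le> b * (\<Sum>j\<in>T - A. (cmod (x j))\<^sup>2)"
    using T finT by (intro rip_upper) (auto intro: order_trans[OF card_mono])
  finally show ?thesis
    by simp
qed

lemma sum_outside_chosen_le:
  assumes T: "T \<subseteq> {1..N}" and card: "card (T \<union> chosen k) \<le> u"
  shows "a * (\<Sum>j\<in>T - chosen k. (cmod (x j))\<^sup>2)
    \<le> 2 * err k + 2 * dnorm2 m \<xi> (\<lambda>y. f0 y - lincomb \<phi> T x y)"
proof -
  let ?A = "T \<union> chosen k"
  have finT: "finite T"
    using T finite_subset by blast
  obtain \<delta> where \<delta>: "\<And>y. F k y - (f0 y - lincomb \<phi> T x y) = lincomb \<phi> ?A \<delta> y"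
    and agree: "\<And>j. j \<in> T - chosen k \<Longrightarrow> \<delta> j = x j"
    using residual_diff_approx[OF finT, where k = k and \<zeta> = x] by blast
  have "(\<Sum>j\<in>T - chosen k. (cmod (x j))\<^sup>2) = (\<Sum>j\<in>T - chosen k. (cmod (\<delta> j))\<^sup>2)"
    using agree by simp
  also have "\<dots> \<le> (\<Sum>j\<in>?A. (cmod (\<delta> j))\<^sup>2)"
    using finT finite_chosen by (intro sum_mono2) auto
  finally have "a * (\<Sum>j\<in>T - chosen k. (cmod (x j))\<^sup>2) \<le> a * (\<Sum>j\<in>?A. (cmod (\<delta> j))\<^sup>2)"
    using a_pos by simp
  also have "\<dots> \<le> dnorm2 m \<xi> (lincomb \<phi> ?A \<delta>)"
    using T chosen_subset card by (intro rip_lower) auto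
  also have "\<dots> = dnorm2 m \<xi> (\<lambda>y. F k y - (f0 y - lincomb \<phi> T x y))"
    by (simp add: \<delta>)
  also have "\<dots> \<le> 2 * err k + 2 * dnorm2 m \<xi> (\<lambda>y. f0 y - lincomb \<phi> T x y)"
    by (rule dnorm2_diff_le)
  finally show ?thesis .
qed

lemma card_union_chosen_le: "finite J \<Longrightarrow> card (J \<union> chosen k) \<le> card J + k"
  using card_Un_le[of J "chosen k"] card_chosen_le[of k] by linarith

lemma err_after_capture:
  assumes J: "J \<subseteq> {1..N}" and budget: "card J + (k0 + n) \<le> u"
    and c': "64 * b / a \<le> real c' * (a * t\<^sup>2)"
    and U: "U \<subseteq> J - chosen k0" and cU: "c' * card U \<le> n"
  shows "err (k0 + n) \<le> 2 * dnorm2 m \<xi> (\<lambda>x. f0 x - lincomb \<phi> J \<beta> x)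
    + 2 * b * (\<Sum>j\<in>(J - chosen k0) - U. (cmod (\<beta> j))\<^sup>2) + a / (64 * b) * err k0"
proof -
  have finJ: "finite J"
    using J finite_subset by blast
  have cardJ: "card J \<le> u"
    using budget by simp
  have damp: "0 \<le> a / (64 * b) * err k0"
    using a_pos a_le_b by (intro mult_nonneg_nonneg divide_nonneg_nonneg dnorm2_nonneg) auto
  show ?thesis
  proof (cases "U = {}")
    case True
    have "err (k0 + n) \<le> dnorm2 m \<xi> (\<lambda>x. f0 x - lincomb \<phi> (J \<inter> chosen k0) \<beta> x)"
      using err_antimono[of k0 "k0 + n"] err_le_approx[of "J \<inter> chosen k0" k0 \<beta>] by simp
    also have "\<dots> \<le> 2 * dnorm2 m \<xi> (\<lambda>x. f0 x - lincomb \<phi> J \<beta> x)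
        + 2 * b * (\<Sum>j\<in>J - chosen k0. (cmod (\<beta> j))\<^sup>2)"
      by (rule dnorm2_approx_restrict_le[OF J cardJ])
    finally show ?thesis
      using True damp by simp
  next
    case False
    define J' where "J' = J \<inter> (chosen k0 \<union> U)"
    have Diff_Un2: "J - (chosen k0 \<union> U) = J - chosen k0 - U"
      by blast
    have finU: "finite U"
      using U finJ finite_subset by blast
    have "card (J' \<union> chosen k) \<le> u" if "k < k0 + n" for k
      using card_union_chosen_le[of J' k] card_mono[OF finJ, of J'] budget that finJ
      unfolding J'_def by simp
    then have "err (k0 + n) \<le> dnorm2 m \<xi> (\<lambda>x. f0 x - lincomb \<phi> J' \<beta> x)
        + err k0 / (1 + real n * (a * t\<^sup>2) / real (card U))"
      using J finU False by (intro err_after_substage) (auto simp: J'_def)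
    also have "dnorm2 m \<xi> (\<lambda>x. f0 x - lincomb \<phi> J' \<beta> x) \<le> 2 * dnorm2 m \<xi> (\<lambda>x. f0 x - lincomb \<phi> J \<beta> x)
        + 2 * b * (\<Sum>j\<in>(J - chosen k0) - U. (cmod (\<beta> j))\<^sup>2)"
      using dnorm2_approx_restrict_le[OF J cardJ, of "chosen k0 \<union> U" \<beta>]
      unfolding J'_def Diff_Un2 .
    also have "err k0 / (1 + real n * (a * t\<^sup>2) / real (card U)) \<le> a / (64 * b) * err k0"
    proof -
      have "0 < real (card U)"
        using finU False by (simp add: card_gt_0_iff)
      moreover have "real c' * real (card U) \<le> real n"
        using cU by (metis of_nat_le_iff of_nat_mult)
      then have "real c' * real (card U) * (a * t\<^sup>2) \<le> real n * (a * t\<^sup>2)"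
        using a_pos by (intro mult_right_mono) auto
      ultimately have "real c' * (a * t\<^sup>2) \<le> real n * (a * t\<^sup>2) / real (card U)"
        by (simp add: pos_le_divide_eq mult_ac)
      then have le: "64 * b / a \<le> 1 + real n * (a * t\<^sup>2) / real (card U)"
        using c' by linarith
      have pos: "0 < 64 * b / a"
        using a_pos a_le_b by simp
      have "err k0 / (1 + real n * (a * t\<^sup>2) / real (card U)) \<le> err k0 / (64 * b / a)"
        using le pos by (intro divide_left_mono dnorm2_nonneg mult_pos_pos) auto
      then show ?thesis
        by (simp add: mult.commute)
    qed
    finally show ?thesis
      by simp
  qed
qed

lemma err_le_after_budget:
  assumes J: "J \<subseteq> {1..N}" "card J = v" and budget: "v + 8 * c' * v \<le> u"
    and c': "64 * b / a \<le> real c' * (a * t\<^sup>2)"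
  shows "err (8 * c' * v) \<le> 12 * dnorm2 m \<xi> (\<lambda>x. f0 x - lincomb \<phi> J \<beta> x)"
proof -
  let ?\<sigma> = "dnorm2 m \<xi> (\<lambda>x. f0 x - lincomb \<phi> J \<beta> x)"
  have finJ: "finite J"
    using J finite_subset by blast
  have card_bound: "card (J \<union> chosen k) \<le> u" if "k \<le> 8 * c' * v" for k
    using card_union_chosen_le[OF finJ, of k] J budget that by linarith
  interpret capture_dynamics err "\<lambda>k. J - chosen k" "\<lambda>j. (cmod (\<beta> j))\<^sup>2" a b ?\<sigma> c' "8 * c' * v"
  proof
    show "0 < a" "a \<le> b"
      by (fact a_pos, fact a_le_b)
    show "0 \<le> ?\<sigma>" "\<And>j. 0 \<le> (cmod (\<beta> j))\<^sup>2" "\<And>k. finite (J - chosen k)"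
      using dnorm2_nonneg finJ by auto
    show "\<And>k k'. k \<le> k' \<Longrightarrow> J - chosen k' \<subseteq> J - chosen k"
      using chosen_mono by blast
    show "\<And>k k'. k \<le> k' \<Longrightarrow> err k' \<le> err k"
      by (rule err_antimono)
    show "a * (\<Sum>j\<in>J - chosen k. (cmod (\<beta> j))\<^sup>2) \<le> 2 * err k + 2 * ?\<sigma>" if "k \<le> 8 * c' * v" for k
      using sum_outside_chosen_le[OF J(1) card_bound[OF that]] .
    show "err k \<le> 2 * ?\<sigma> + 2 * b * (\<Sum>j\<in>J - chosen k. (cmod (\<beta> j))\<^sup>2)" if "k \<le> 8 * c' * v" for k
      using err_le_approx[of "J \<inter> chosen k" k \<beta>] dnorm2_approx_restrict_le[OF J(1), of "chosen k" \<beta>]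
        J budget by simp
    show "err (k0 + n) \<le> 2 * ?\<sigma> + 2 * b * (\<Sum>j\<in>(J - chosen k0) - U. (cmod (\<beta> j))\<^sup>2) + a / (64 * b) * err k0"
      if "U \<subseteq> J - chosen k0" "c' * card U \<le> n" "k0 + n \<le> 8 * c' * v" for k0 U n
      using err_after_capture[OF J(1) _ c' that(1,2)] J budget that(3) by simp
  qed
  show ?thesis
    using E_le_after_budget[of 0 v] J by (simp add: chosen_def)
qed

end

section \<open>Comparison of L2 and Lp norms\<close>

lemma power2_le_split:
  fixes y l p :: real
  assumes "0 \<le> y" "0 < l" "2 \<le> p"
  shows "y powr 2 \<le> l powr 2 + l powr (2 - p) * y powr p"
proof (cases "y \<le> l")
  case True
  then have "y powr 2 \<le> l powr 2"
    using assms by (intro powr_mono2) auto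
  then show ?thesis
    by (simp add: add_increasing2)
next
  case False
  have "l powr (p - 2) \<le> y powr (p - 2)"
    using assms False by (intro powr_mono2) auto
  then have "l powr (2 - p) * (y powr 2 * l powr (p - 2)) \<le> l powr (2 - p) * y powr p"
    using mult_left_mono[of "l powr (p - 2)" "y powr (p - 2)" "y powr 2"]
    by (intro mult_left_mono) (auto simp flip: powr_add)
  moreover have "l powr (2 - p) * (y powr 2 * l powr (p - 2)) = y powr 2"
    using assms by (simp add: mult.left_commute flip: powr_add)
  ultimately show ?thesis
    by (simp add: add_increasing)
qed

lemma root_mean_le_of_split:
  fixes A B p :: real
  assumes p: "2 \<le> p" and A: "0 \<le> A" and B: "0 \<le> B"
    and split: "\<And>l. 0 < l \<Longrightarrow> B \<le> l powr 2 + l powr (2 - p) * A"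
  shows "B powr (1/2) \<le> sqrt 2 * A powr (1/p)"
proof (cases "A = 0")
  case True
  have "B \<le> 0"
  proof (rule field_le_epsilon)
    fix e :: real
    assume "0 < e"
    then show "B \<le> 0 + e"
      using split[of "sqrt e"] True by (simp add: powr_numeral)
  qed
  then show ?thesis
    using B True by simp
next
  case False
  define l where "l = A powr (1/p)"
  have l: "0 < l"
    unfolding l_def using A False by simp
  have "l powr p = A"
    unfolding l_def using A p by (simp add: powr_powr)
  then have "l powr (2 - p) * A = l powr 2"
    using l by (metis add_diff_cancel_left' diff_add_cancel powr_add)
  then have "B \<le> 2 * l powr 2"
    using split[OF l] by simp
  then have "B powr (1/2) \<le> (2 * l powr 2) powr (1/2)"
    using B by (intro powr_mono2) auto
  also have "\<dots> = sqrt 2 * l"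
    using l by (simp add: powr_mult powr_powr powr_half_sqrt)
  finally show ?thesis
    unfolding l_def .
qed

lemma powr_le_two_mean_powr:
  fixes P Q p :: real
  assumes "0 \<le> P" "0 \<le> Q" "1 \<le> p"
  shows "P powr (1/p) \<le> 2 * ((1/2) * P + (1/2) * Q) powr (1/p)"
proof -
  have "P powr (1/p) \<le> (2 * ((1/2) * P + (1/2) * Q)) powr (1/p)"
    using assms by (intro powr_mono2) auto
  also have "\<dots> = 2 powr (1/p) * ((1/2) * P + (1/2) * Q) powr (1/p)"
    by (rule powr_mult)
  also have "\<dots> \<le> 2 * ((1/2) * P + (1/2) * Q) powr (1/p)"
    using assms powr_le_cancel_iff[of 2 "1/p" 1] by (intro mult_right_mono) auto
  finally show ?thesis .
qed

lemma Lp_norm_nonneg: "0 \<le> Lp_norm M p h"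
  unfolding Lp_norm_def by simp

lemma dnorm_le_discrete_Lp:
  assumes p: "2 \<le> p" and m: "0 < m"
  shows "dnorm m \<xi> h \<le> sqrt 2 * ((\<Sum>j\<in>{1..m}. cmod (h (\<xi> j)) powr p) / real m) powr (1/p)"
proof -
  let ?A = "(\<Sum>j\<in>{1..m}. cmod (h (\<xi> j)) powr p) / real m"
  let ?B = "(\<Sum>j\<in>{1..m}. cmod (h (\<xi> j)) powr 2) / real m"
  have "?B powr (1/2) \<le> sqrt 2 * ?A powr (1/p)"
  proof (rule root_mean_le_of_split[OF p])
    show "0 \<le> ?A" "0 \<le> ?B"
      by (simp_all add: sum_nonneg)
    fix l :: real
    assume l: "0 < l"
    have "(\<Sum>j\<in>{1..m}. cmod (h (\<xi> j)) powr 2)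
        \<le> (\<Sum>j\<in>{1..m}. l powr 2 + l powr (2 - p) * cmod (h (\<xi> j)) powr p)"
      using power2_le_split[OF _ l p] by (intro sum_mono) auto
    also have "\<dots> = real m * l powr 2 + l powr (2 - p) * (\<Sum>j\<in>{1..m}. cmod (h (\<xi> j)) powr p)"
      by (simp add: sum.distrib sum_distrib_left)
    finally show "?B \<le> l powr 2 + l powr (2 - p) * ?A"
      using m by (simp add: field_simps)
  qed
  moreover have "?B powr (1/2) = dnorm m \<xi> h"
    unfolding dnorm_def by (simp add: powr_half_sqrt sum_nonneg)
  ultimately show ?thesis
    by simp
qed

lemma Lp_norm_le_Lp_xi_norm:
  assumes "1 \<le> p"
  shows "Lp_norm M p h \<le> 2 * Lp_xi_norm M m \<xi> p h"
  unfolding Lp_norm_def Lp_xi_norm_def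
  using assms by (intro powr_le_two_mean_powr) (simp_all add: sum_nonneg)

lemma dnorm_le_Lp_xi_norm:
  assumes p: "2 \<le> p" and m: "0 < m"
  shows "dnorm m \<xi> h \<le> 2 * sqrt 2 * Lp_xi_norm M m \<xi> p h"
proof -
  have "((\<Sum>j\<in>{1..m}. cmod (h (\<xi> j)) powr p) / real m) powr (1/p) \<le> 2 * Lp_xi_norm M m \<xi> p h"
    unfolding Lp_xi_norm_def using p
    by (subst add.commute) (intro powr_le_two_mean_powr, simp_all add: sum_nonneg)
  then have "sqrt 2 * ((\<Sum>j\<in>{1..m}. cmod (h (\<xi> j)) powr p) / real m) powr (1/p)
      \<le> 2 * sqrt 2 * Lp_xi_norm M m \<xi> p h"
    by (simp add: mult_left_mono mult.left_commute)
  then show ?thesis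
    using dnorm_le_discrete_Lp[OF p m, of \<xi> h] by linarith
qed

locale compact_prob_domain = prob_space M for M :: "'b::topological_space measure" +
  fixes \<Omega> :: "'b set"
  assumes space_eq: "space M = \<Omega>" and sets_eq: "sets M = sets (restrict_space borel \<Omega>)"
    and compact_domain: "compact \<Omega>"
begin

lemma borel_measurable_continuous:
  "continuous_on \<Omega> h \<Longrightarrow> (h :: 'b \<Rightarrow> complex) \<in> borel_measurable M"
  using borel_measurable_continuous_on_restrict measurable_cong_sets[OF sets_eq refl] by blast

lemma integrable_powr_continuous:
  assumes h: "continuous_on \<Omega> (h :: 'b \<Rightarrow> complex)" and q: "0 \<le> q"
  shows "integrable M (\<lambda>x. cmod (h x) powr q)"
proof -
  have "compact ((\<lambda>x. cmod (h x)) ` \<Omega>)"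
    using h compact_domain by (intro compact_continuous_image continuous_intros)
  then obtain B where B: "\<And>x. x \<in> \<Omega> \<Longrightarrow> cmod (h x) \<le> B"
    using compact_imp_bounded bounded_real by (metis abs_le_D1 image_eqI)
  have "AE x in M. norm (cmod (h x) powr q) \<le> B powr q"
    using B q space_eq by (intro AE_I2) (simp add: powr_mono2)
  moreover have "(\<lambda>x. cmod (h x) powr q) \<in> borel_measurable M"
    using borel_measurable_continuous[OF h] by measurable
  ultimately show ?thesis
    by (rule integrable_const_bound)
qed

lemma Lp_norm_2_le_Lp_norm:
  assumes h: "continuous_on \<Omega> (h :: 'b \<Rightarrow> complex)" and p: "2 \<le> p"
  shows "Lp_norm M 2 h \<le> sqrt 2 * Lp_norm M p h"
proof -
  let ?A = "\<integral>x. cmod (h x) powr p \<partial>M"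
  let ?B = "\<integral>x. cmod (h x) powr 2 \<partial>M"
  have iA: "integrable M (\<lambda>x. cmod (h x) powr p)"
    using integrable_powr_continuous[OF h] p by simp
  have iB: "integrable M (\<lambda>x. cmod (h x) powr 2)"
    using integrable_powr_continuous[OF h, of 2] by simp
  have "?B powr (1/2) \<le> sqrt 2 * ?A powr (1/p)"
  proof (rule root_mean_le_of_split[OF p])
    show "0 \<le> ?A" "0 \<le> ?B"
      by simp_all
    fix l :: real
    assume l: "0 < l"
    have "?B \<le> (\<integral>x. l powr 2 + l powr (2 - p) * cmod (h x) powr p \<partial>M)"
      using iA iB power2_le_split[OF _ l p] by (intro integral_mono) auto
    also have "\<dots> = l powr 2 + l powr (2 - p) * ?A"
      using iA by (simp add: prob_space)
    finally show "?B \<le> l powr 2 + l powr (2 - p) * ?A" .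
  qed
  then show ?thesis
    unfolding Lp_norm_def by simp
qed

lemma Lp_norm_add_le:
  assumes h1: "continuous_on \<Omega> (h1 :: 'b \<Rightarrow> complex)" and h2: "continuous_on \<Omega> h2" and p: "1 \<le> p"
  shows "Lp_norm M p (\<lambda>x. h1 x + h2 x) \<le> 4 * (Lp_norm M p h1 + Lp_norm M p h2)"
proof -
  let ?A1 = "\<integral>x. cmod (h1 x) powr p \<partial>M" and ?A2 = "\<integral>x. cmod (h2 x) powr p \<partial>M"
  have i1: "integrable M (\<lambda>x. cmod (h1 x) powr p)" and i2: "integrable M (\<lambda>x. cmod (h2 x) powr p)"
    and i: "integrable M (\<lambda>x. cmod (h1 x + h2 x) powr p)"
    using h1 h2 p by (auto intro!: integrable_powr_continuous continuous_intros)
  have pointwise: "cmod (y1 + y2) powr p \<le> 2 powr p * (cmod y1 powr p + cmod y2 powr p)"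
    for y1 y2 :: complex
  proof -
    have "cmod (y1 + y2) powr p \<le> (2 * max (cmod y1) (cmod y2)) powr p"
      using p norm_triangle_ineq[of y1 y2] by (intro powr_mono2) auto
    also have "\<dots> = 2 powr p * max (cmod y1) (cmod y2) powr p"
      by (simp add: powr_mult)
    also have "max (cmod y1) (cmod y2) powr p \<le> cmod y1 powr p + cmod y2 powr p"
      by (cases "cmod y1 \<le> cmod y2") (auto simp: max_def)
    finally show ?thesis
      by (simp add: mult_left_mono)
  qed
  have "(\<integral>x. cmod (h1 x + h2 x) powr p \<partial>M) \<le> (\<integral>x. 2 powr p * (cmod (h1 x) powr p + cmod (h2 x) powr p) \<partial>M)"
    using i i1 i2 pointwise by (intro integral_mono) auto
  also have "\<dots> = 2 powr p * (?A1 + ?A2)"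
    using i1 i2 by simp
  finally have "(\<integral>x. cmod (h1 x + h2 x) powr p \<partial>M) powr (1/p) \<le> (2 powr p * (?A1 + ?A2)) powr (1/p)"
    using p by (intro powr_mono2) auto
  also have "\<dots> = 2 * (?A1 + ?A2) powr (1/p)"
    using p by (simp add: powr_mult powr_powr)
  also have "(?A1 + ?A2) powr (1/p) \<le> (2 * max ?A1 ?A2) powr (1/p)"
    using p by (intro powr_mono2) auto
  also have "\<dots> = 2 powr (1/p) * max ?A1 ?A2 powr (1/p)"
    by (simp add: powr_mult)
  also have "\<dots> \<le> 2 * (?A1 powr (1/p) + ?A2 powr (1/p))"
  proof (rule mult_mono)
    show "2 powr (1/p) \<le> 2"
      using p powr_le_cancel_iff[of 2 "1/p" 1] by simp
    show "max ?A1 ?A2 powr (1/p) \<le> ?A1 powr (1/p) + ?A2 powr (1/p)"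
      by (cases "?A1 \<le> ?A2") (auto simp: max_def)
  qed auto
  finally show ?thesis
    unfolding Lp_norm_def by simp
qed

end

section \<open>WOMP on sampling points\<close>

lemma lincomb_extend_to_card:
  assumes "J \<subseteq> {1..N}" "card J \<le> u" "u \<le> N"
  obtains J' \<beta>' where "J' \<subseteq> {1..N}" "card J' = u" "lincomb \<phi> J \<beta> = lincomb \<phi> J' \<beta>'"
proof -
  obtain J' where J': "J \<subseteq> J'" "J' \<subseteq> {1..N}" "card J' = u"
    using exists_subset_between[of J u "{1..N}"] assms by auto
  then have "finite J'"
    using finite_subset by blast
  then show ?thesis
    using that J' lincomb_extend_zero[of J' J \<phi> \<beta>] by blast
qed

lemma lincomb_in_Sigma_terms_le:
  assumes "J \<subseteq> {1..N}" "card J \<le> u" "u \<le> N"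
  shows "lincomb \<phi> J \<beta> \<in> Sigma_terms \<phi> N u"
proof -
  obtain J' \<beta>' where "J' \<subseteq> {1..N}" "card J' = u" "lincomb \<phi> J \<beta> = lincomb \<phi> J' \<beta>'"
    by (rule lincomb_extend_to_card[OF assms])
  then show ?thesis
    by (simp add: lincomb_in_Sigma_terms)
qed

lemma universal_discretization_lincomb:
  assumes disc: "universal_discretization M 2 m \<xi> \<phi> N u" and J: "J \<subseteq> {1..N}" "card J \<le> u" "u \<le> N"
  shows "(Lp_norm M 2 (lincomb \<phi> J \<beta>))\<^sup>2 \<le> 2 * dnorm2 m \<xi> (lincomb \<phi> J \<beta>)"
    and "dnorm2 m \<xi> (lincomb \<phi> J \<beta>) \<le> 3 / 2 * (Lp_norm M 2 (lincomb \<phi> J \<beta>))\<^sup>2"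
proof -
  obtain J' \<beta>' where J': "J' \<subseteq> {1..N}" "card J' = u" and eq: "lincomb \<phi> J \<beta> = lincomb \<phi> J' \<beta>'"
    by (rule lincomb_extend_to_card[OF J])
  have powr2: "x powr 2 = x\<^sup>2" if "0 \<le> x" for x :: real
    using that by (cases "x = 0") (simp_all add: powr_numeral)
  have "1/2 * Lp_norm M 2 (lincomb \<phi> J' \<beta>') powr 2 \<le> dnorm2 m \<xi> (lincomb \<phi> J' \<beta>')
      \<and> dnorm2 m \<xi> (lincomb \<phi> J' \<beta>') \<le> 3/2 * Lp_norm M 2 (lincomb \<phi> J' \<beta>') powr 2"
    using disc J' unfolding universal_discretization_def Let_def dnorm2_def lincomb_def by simp
  then show "(Lp_norm M 2 (lincomb \<phi> J \<beta>))\<^sup>2 \<le> 2 * dnorm2 m \<xi> (lincomb \<phi> J \<beta>)"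
    and "dnorm2 m \<xi> (lincomb \<phi> J \<beta>) \<le> 3 / 2 * (Lp_norm M 2 (lincomb \<phi> J \<beta>))\<^sup>2"
    unfolding eq by (simp_all add: powr2 Lp_norm_nonneg)
qed

lemma riesz_system_lincomb:
  assumes riesz: "riesz_system M \<phi> N R1 R2" and J: "J \<subseteq> {1..N}" and R1: "0 \<le> R1"
  shows "R1\<^sup>2 * (\<Sum>j\<in>J. (cmod (\<beta> j))\<^sup>2) \<le> (Lp_norm M 2 (lincomb \<phi> J \<beta>))\<^sup>2"
    and "(Lp_norm M 2 (lincomb \<phi> J \<beta>))\<^sup>2 \<le> R2\<^sup>2 * (\<Sum>j\<in>J. (cmod (\<beta> j))\<^sup>2)"
proof -
  define \<beta>' where "\<beta>' = (\<lambda>j. if j \<in> J then \<beta> j else 0)"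
  define Q where "Q = (\<Sum>j\<in>J. (cmod (\<beta> j))\<^sup>2)"
  define L where "L = Lp_norm M 2 (lincomb \<phi> J \<beta>)"
  have "(\<Sum>j\<in>{1..N}. (cmod (\<beta>' j))\<^sup>2) = Q"
    unfolding Q_def \<beta>'_def using J by (intro sum.mono_neutral_cong_right) auto
  moreover have "(\<lambda>x. \<Sum>j\<in>{1..N}. \<beta>' j * \<phi> j x) = lincomb \<phi> J \<beta>"
    unfolding \<beta>'_def using lincomb_extend_zero[of "{1..N}" J \<phi> \<beta>] J by (simp add: lincomb_def)
  moreover have "R1 * sqrt (\<Sum>j\<in>{1..N}. (cmod (\<beta>' j))\<^sup>2) \<le> Lp_norm M 2 (\<lambda>x. \<Sum>j\<in>{1..N}. \<beta>' j * \<phi> j x)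
      \<and> Lp_norm M 2 (\<lambda>x. \<Sum>j\<in>{1..N}. \<beta>' j * \<phi> j x) \<le> R2 * sqrt (\<Sum>j\<in>{1..N}. (cmod (\<beta>' j))\<^sup>2)"
    using riesz unfolding riesz_system_def by blast
  ultimately have bounds: "R1 * sqrt Q \<le> L" "L \<le> R2 * sqrt Q"
    unfolding L_def by simp_all
  have Q: "0 \<le> Q"
    unfolding Q_def by (simp add: sum_nonneg)
  have "(R1 * sqrt Q)\<^sup>2 \<le> L\<^sup>2"
    using bounds R1 Q by (intro power_mono) auto
  then show "R1\<^sup>2 * (\<Sum>j\<in>J. (cmod (\<beta> j))\<^sup>2) \<le> (Lp_norm M 2 (lincomb \<phi> J \<beta>))\<^sup>2"
    using Q unfolding Q_def L_def by (simp add: power_mult_distrib)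
  have "L\<^sup>2 \<le> (R2 * sqrt Q)\<^sup>2"
    using bounds Lp_norm_nonneg unfolding L_def by (intro power_mono) auto
  then show "(Lp_norm M 2 (lincomb \<phi> J \<beta>))\<^sup>2 \<le> R2\<^sup>2 * (\<Sum>j\<in>J. (cmod (\<beta> j))\<^sup>2)"
    using Q unfolding Q_def L_def by (simp add: power_mult_distrib)
qed

locale womp_sampling = compact_prob_domain M \<Omega>
  for M :: "'b::topological_space measure" and \<Omega> +
  fixes \<phi> :: "nat \<Rightarrow> 'b \<Rightarrow> complex" and N u m :: nat and \<xi> :: "nat \<Rightarrow> 'b"
    and R1 R2 p H t :: real and f0 :: "'b \<Rightarrow> complex" and g :: "nat \<Rightarrow> nat"
    and F :: "nat \<Rightarrow> 'b \<Rightarrow> complex"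
  assumes dict_continuous: "\<And>j. j \<in> {1..N} \<Longrightarrow> continuous_on \<Omega> (\<phi> j)"
    and dict_bounded: "\<And>j x. j \<in> {1..N} \<Longrightarrow> x \<in> \<Omega> \<Longrightarrow> cmod (\<phi> j x) \<le> 1"
    and riesz: "riesz_system M \<phi> N R1 R2" and R1_pos: "0 < R1" and R1_le_R2: "R1 \<le> R2"
    and u_pos: "1 \<le> u" and u_le_N: "u \<le> N"
    and sample_points: "\<And>j. j \<in> {1..m} \<Longrightarrow> \<xi> j \<in> \<Omega>"
    and discretization: "universal_discretization M 2 m \<xi> \<phi> N u"
    and nikolskii: "nikolskii M \<phi> N 2 p H u" and p: "2 \<le> p"
    and weakness_pos: "0 < t" and f0_continuous: "continuous_on \<Omega> f0"
    and run: "womp_run m \<xi> \<phi> N t f0 g F"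
begin

lemma discrete_rip_lower:
  "J \<subseteq> {1..N} \<Longrightarrow> card J \<le> u \<Longrightarrow> R1\<^sup>2 / 2 * (\<Sum>j\<in>J. (cmod (\<beta> j))\<^sup>2) \<le> dnorm2 m \<xi> (lincomb \<phi> J \<beta>)"
  using riesz_system_lincomb(1)[OF riesz, of J \<beta>] universal_discretization_lincomb(1)[OF discretization, of J \<beta>]
    R1_pos u_le_N by simp

lemma discrete_rip_upper:
  "J \<subseteq> {1..N} \<Longrightarrow> card J \<le> u \<Longrightarrow> dnorm2 m \<xi> (lincomb \<phi> J \<beta>) \<le> 3 * R2\<^sup>2 / 2 * (\<Sum>j\<in>J. (cmod (\<beta> j))\<^sup>2)"
  using riesz_system_lincomb(2)[OF riesz, of J \<beta>] universal_discretization_lincomb(2)[OF discretization, of J \<beta>]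
    R1_pos u_le_N by simp

lemma sample_size_pos: "0 < m"
proof (rule ccontr)
  assume "\<not> 0 < m"
  moreover have "R1\<^sup>2 / 2 * 1 \<le> dnorm2 m \<xi> (lincomb \<phi> {1} (\<lambda>_. 1))"
    using discrete_rip_lower[of "{1}" "\<lambda>_. 1"] u_pos u_le_N by simp
  ultimately show False
    using R1_pos by (simp add: dnorm2_def)
qed

lemma dnorm2_dict_le_1:
  assumes "j \<in> {1..N}"
  shows "dnorm2 m \<xi> (\<phi> j) \<le> 1"
proof -
  have "(\<Sum>i\<in>{1..m}. (cmod (\<phi> j (\<xi> i)))\<^sup>2) \<le> (\<Sum>i\<in>{1..m}. 1)"
    using assms dict_bounded sample_points by (intro sum_mono power_le_one) auto
  then show ?thesis
    unfolding dnorm2_def using sample_size_pos by simp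
qed

sublocale womp: womp_rip m \<xi> \<phi> N u t "R1\<^sup>2 / 2" "3 * R2\<^sup>2 / 2" f0 g F
proof
  show "R1\<^sup>2 / 2 \<le> 3 * R2\<^sup>2 / 2"
    using power_mono[OF R1_le_R2 less_imp_le[OF R1_pos], of 2] zero_le_power2[of R2] by linarith
qed (use dnorm2_dict_le_1 discrete_rip_lower discrete_rip_upper run weakness_pos R1_pos u_pos u_le_N in auto)

lemma nikolskii_constant_ge: "1 \<le> sqrt 2 * H"
proof -
  define f where "f = lincomb \<phi> {1} (\<lambda>_. 1)"
  have "R1\<^sup>2 \<le> (Lp_norm M 2 f)\<^sup>2"
    using riesz_system_lincomb(1)[OF riesz, of "{1}" "\<lambda>_. 1"] R1_pos u_pos u_le_N unfolding f_def by simp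
  moreover have "0 < R1\<^sup>2"
    using R1_pos by simp
  ultimately have L2_pos: "0 < Lp_norm M 2 f"
    using Lp_norm_nonneg[of M 2 f] by (cases "Lp_norm M 2 f = 0") auto
  have "Lp_norm M 2 f \<le> sqrt 2 * Lp_norm M p f"
    unfolding f_def using dict_continuous u_pos u_le_N
    by (intro Lp_norm_2_le_Lp_norm continuous_on_lincomb p) auto
  also have "\<dots> \<le> sqrt 2 * (H * Lp_norm M 2 f)"
    using nikolskii lincomb_in_Sigma_terms_le[of "{1}" N u \<phi>] u_pos u_le_N
    unfolding nikolskii_def f_def by (intro mult_left_mono) auto
  finally show ?thesis
    using L2_pos by (simp add: mult.assoc)
qed

text \<open>The hypothesis on \<open>c\<close> is \<open>64 b / a \<le> c a t^2\<close> for the isometry constants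
  \<open>a = R1^2/2\<close> and \<open>b = 3 R2^2/2\<close>.\<close>
lemma dnorm_residual_le:
  assumes J: "J \<subseteq> {1..N}" "card J = v" and budget: "v + 8 * c * v \<le> u"
    and c: "384 * R2\<^sup>2 \<le> real c * R1 ^ 4 * t\<^sup>2"
  shows "dnorm m \<xi> (F (8 * c * v)) \<le> 4 * dnorm m \<xi> (\<lambda>x. f0 x - lincomb \<phi> J \<beta> x)"
proof -
  have "64 * (3 * R2\<^sup>2 / 2) / (R1\<^sup>2 / 2) \<le> real c * (R1\<^sup>2 / 2 * t\<^sup>2)"
    using c R1_pos by (simp add: field_simps power4_eq_xxxx power2_eq_square)
  then have "dnorm2 m \<xi> (F (8 * c * v)) \<le> 12 * dnorm2 m \<xi> (\<lambda>x. f0 x - lincomb \<phi> J \<beta> x)"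
    by (rule womp.err_le_after_budget[OF J budget])
  then have "dnorm m \<xi> (F (8 * c * v)) \<le> sqrt (16 * dnorm2 m \<xi> (\<lambda>x. f0 x - lincomb \<phi> J \<beta> x))"
    unfolding dnorm_eq_sqrt using dnorm2_nonneg[of m \<xi> "\<lambda>x. f0 x - lincomb \<phi> J \<beta> x"]
    by (intro real_sqrt_le_mono) linarith
  then show ?thesis
    by (simp add: real_sqrt_mult dnorm_eq_sqrt)
qed

text \<open>The residual is the competitor's error plus a \<open>u\<close>-sparse function, whose \<open>L_p\<close> norm is
  controlled through the Nikol'skii inequality, the discretization and the discrete estimate.\<close>
lemma Lp_norm_residual_le:
  assumes J: "J \<subseteq> {1..N}" "card J = v" and budget: "v + 8 * c * v \<le> u"
    and c: "384 * R2\<^sup>2 \<le> real c * R1 ^ 4 * t\<^sup>2"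
  shows "Lp_norm M p (F (8 * c * v)) \<le> H * 100 * Lp_xi_norm M m \<xi> p (\<lambda>x. f0 x - lincomb \<phi> J \<beta> x)"
proof -
  let ?K = "8 * c * v" and ?A = "J \<union> womp.chosen (8 * c * v)"
  define h1 where "h1 = (\<lambda>x. f0 x - lincomb \<phi> J \<beta> x)"
  define X where "X = Lp_xi_norm M m \<xi> p h1"
  have finJ: "finite J"
    using J finite_subset by blast
  obtain \<delta> where \<delta>: "\<And>y. F ?K y - h1 y = lincomb \<phi> ?A \<delta> y"
    using womp.residual_diff_approx[OF finJ, where k = ?K and \<zeta> = \<beta>] unfolding h1_def by blast
  define h2 where "h2 = lincomb \<phi> ?A \<delta>"
  have F_eq: "F ?K = (\<lambda>x. h1 x + h2 x)"
    using \<delta> unfolding h2_def by (auto simp: algebra_simps fun_eq_iff)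
  have A: "?A \<subseteq> {1..N}" "card ?A \<le> u"
    using J womp.chosen_subset womp.card_union_chosen_le[OF finJ, of ?K] budget by auto
  have cont: "continuous_on \<Omega> h1" "continuous_on \<Omega> h2"
    unfolding h1_def h2_def using A J f0_continuous dict_continuous
    by (auto intro!: continuous_intros continuous_on_lincomb)
  have X: "0 \<le> X"
    unfolding X_def Lp_xi_norm_def by simp
  have "0 < sqrt 2 * H"
    using nikolskii_constant_ge by linarith
  then have H: "1 \<le> sqrt 2 * H" "0 \<le> H"
    using nikolskii_constant_ge by (auto simp: zero_less_mult_iff)
  have "dnorm m \<xi> h2 \<le> dnorm m \<xi> (F ?K) + dnorm m \<xi> h1"
    using dnorm_triangle_diff[of m \<xi> "F ?K" h1] \<delta> unfolding h2_def by (simp add: fun_eq_iff)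
  also have "\<dots> \<le> 5 * dnorm m \<xi> h1"
    using dnorm_residual_le[OF J budget c, of \<beta>] unfolding h1_def by simp
  also have "\<dots> \<le> 5 * (2 * sqrt 2 * X)"
    unfolding X_def using dnorm_le_Lp_xi_norm[OF p sample_size_pos, of \<xi> h1 M] by (simp add: mult.assoc)
  finally have "sqrt 2 * dnorm m \<xi> h2 \<le> sqrt 2 * (sqrt 2 * (10 * X))"
    by (simp add: mult_left_mono mult_ac)
  then have "sqrt 2 * dnorm m \<xi> h2 \<le> 20 * X"
    by (simp add: mult.assoc[symmetric])
  moreover have "(Lp_norm M 2 h2)\<^sup>2 \<le> (sqrt 2 * dnorm m \<xi> h2)\<^sup>2"
    using universal_discretization_lincomb(1)[OF discretization A u_le_N, of \<delta>]
    unfolding h2_def by (simp add: power_mult_distrib power2_dnorm)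
  then have "Lp_norm M 2 h2 \<le> sqrt 2 * dnorm m \<xi> h2"
    by (rule power2_le_imp_le) (simp add: dnorm_nonneg)
  ultimately have "H * Lp_norm M 2 h2 \<le> H * (20 * X)"
    using H(2) by (intro mult_left_mono) auto
  moreover have "Lp_norm M p h2 \<le> H * Lp_norm M 2 h2"
    using nikolskii lincomb_in_Sigma_terms_le[OF A u_le_N] unfolding nikolskii_def h2_def by blast
  ultimately have h2_bound: "Lp_norm M p h2 \<le> 20 * (H * X)"
    by simp
  have "Lp_norm M p (F ?K) \<le> 4 * (Lp_norm M p h1 + Lp_norm M p h2)"
    unfolding F_eq using Lp_norm_add_le[OF cont] p by simp
  also have "\<dots> \<le> 4 * (2 * X + 20 * (H * X))"
    using Lp_norm_le_Lp_xi_norm[of p M h1 m \<xi>] h2_bound p unfolding X_def by simp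
  also have "\<dots> \<le> 100 * (H * X)"
  proof -
    have "sqrt 2 \<le> 2"
      by (simp add: real_sqrt_le_iff[of 2 4, simplified])
    then have "X \<le> 2 * (H * X)"
      using mult_right_mono[OF H(1) X] mult_right_mono[of "sqrt 2" 2 "H * X"] H(2) X
      by (simp add: mult_ac)
    then show ?thesis
      using H(2) X by (simp add: algebra_simps)
  qed
  finally show ?thesis
    unfolding X_def h1_def by (simp add: mult_ac)
qed

theorem womp_sampling_bounds:
  assumes budget: "v + 8 * c * v \<le> u" and c: "384 * R2\<^sup>2 \<le> real c * R1 ^ 4 * t\<^sup>2"
  shows "dnorm m \<xi> (F (8 * c * v)) \<le> 4 * sigma_disc m \<xi> \<phi> N v f0"
    and "Lp_norm M p (F (8 * c * v)) \<le> H * 100 * sigma_xi M m \<xi> p \<phi> N v f0"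
proof -
  have nonempty: "Sigma_terms \<phi> N v \<noteq> {}"
    using lincomb_in_Sigma_terms[of "{1..v}" N v \<phi> "\<lambda>_. 0"] budget u_le_N by auto
  have "0 < sqrt 2 * H"
    using nikolskii_constant_ge by linarith
  then have H: "0 < H"
    by (simp add: zero_less_mult_iff)
  have pointwise: "dnorm m \<xi> (F (8 * c * v)) / 4 \<le> dnorm m \<xi> (\<lambda>x. f0 x - h x)"
    "Lp_norm M p (F (8 * c * v)) / (H * 100) \<le> Lp_xi_norm M m \<xi> p (\<lambda>x. f0 x - h x)"
    if mem: "h \<in> Sigma_terms \<phi> N v" for h
  proof -
    obtain J \<beta> where J: "J \<subseteq> {1..N}" "card J = v" and h: "h = lincomb \<phi> J \<beta>"
      by (rule Sigma_termsE[OF mem])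
    show "dnorm m \<xi> (F (8 * c * v)) / 4 \<le> dnorm m \<xi> (\<lambda>x. f0 x - h x)"
      using dnorm_residual_le[OF J budget c, of \<beta>] h by simp
    show "Lp_norm M p (F (8 * c * v)) / (H * 100) \<le> Lp_xi_norm M m \<xi> p (\<lambda>x. f0 x - h x)"
      using Lp_norm_residual_le[OF J budget c, of \<beta>] h H by (simp add: pos_divide_le_eq mult_ac)
  qed
  have "dnorm m \<xi> (F (8 * c * v)) / 4 \<le> sigma_disc m \<xi> \<phi> N v f0"
    unfolding sigma_disc_def by (rule cINF_greatest[OF nonempty pointwise(1)])
  then show "dnorm m \<xi> (F (8 * c * v)) \<le> 4 * sigma_disc m \<xi> \<phi> N v f0"
    by simp
  have "Lp_norm M p (F (8 * c * v)) / (H * 100) \<le> sigma_xi M m \<xi> p \<phi> N v f0"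
    unfolding sigma_xi_def by (rule cINF_greatest[OF nonempty pointwise(2)])
  then show "Lp_norm M p (F (8 * c * v)) \<le> H * 100 * sigma_xi M m \<xi> p \<phi> N v f0"
    using H by (simp add: pos_divide_le_eq mult_ac)
qed

end

theorem theorem3p1:
  shows "\<exists>C0 C1 :: real.
    \<forall>t R1 R2 :: real. 0 < t \<and> t \<le> 1 \<and> 0 < R1 \<and> R1 \<le> R2 \<longrightarrow>
    (\<exists>c :: nat. 1 \<le> c \<and>
      (\<forall>(d :: nat) (\<Omega> :: (nat \<Rightarrow> real) set) (M :: (nat \<Rightarrow> real) measure) (p :: real) (N :: nat)
         (\<phi> :: nat \<Rightarrow> (nat \<Rightarrow> real) \<Rightarrow> complex) (u :: nat) (m :: nat) (\<xi> :: nat \<Rightarrow> (nat \<Rightarrow> real))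
         (H :: real).
         \<Omega> \<subseteq> {x. \<forall>i\<ge>d. x i = 0} \<and> compact \<Omega> \<and>
         prob_space M \<and> space M = \<Omega> \<and> sets M = sets (restrict_space borel \<Omega>) \<and>
         2 \<le> p \<and>
         (\<forall>j\<in>{1..N}. continuous_on \<Omega> (\<phi> j) \<and> (\<forall>x\<in>\<Omega>. cmod (\<phi> j x) \<le> 1)) \<and>
         riesz_system M \<phi> N R1 R2 \<and>
         1 \<le> u \<and> u \<le> N \<and>
         (\<forall>j\<in>{1..m}. \<xi> j \<in> \<Omega>) \<and>
         universal_discretization M 2 m \<xi> \<phi> N u \<and>
         nikolskii M \<phi> N 2 p H u
       \<longrightarrow>
         (\<forall>(v :: nat) (f0 :: (nat \<Rightarrow> real) \<Rightarrow> complex) (g :: nat \<Rightarrow> nat)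
            (F :: nat \<Rightarrow> (nat \<Rightarrow> real) \<Rightarrow> complex).
            real v \<le> real u / (1 + real c) \<and> continuous_on \<Omega> f0 \<and>
            womp_run m \<xi> \<phi> N t f0 g F
          \<longrightarrow> dnorm m \<xi> (F (c * v)) \<le> C0 * sigma_disc m \<xi> \<phi> N v f0
            \<and> Lp_norm M p (F (c * v)) \<le> H * C1 * sigma_xi M m \<xi> p \<phi> N v f0)))"
    (is "\<exists>C0 C1. \<forall>t R1 R2. ?assm t R1 R2 \<longrightarrow> ?concl C0 C1 t R1 R2")
proof (rule exI[of _ 4], rule exI[of _ 100], intro allI impI)
  fix t R1 R2 :: real
  assume "0 < t \<and> t \<le> 1 \<and> 0 < R1 \<and> R1 \<le> R2"
  then have t: "0 < t" and R1: "0 < R1" "R1 \<le> R2"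
    by auto
  define c where "c = nat \<lceil>384 * R2\<^sup>2 / (R1 ^ 4 * t\<^sup>2)\<rceil>"
  have pos: "0 < 384 * R2\<^sup>2 / (R1 ^ 4 * t\<^sup>2)"
    using t R1 by simp
  have le: "384 * R2\<^sup>2 / (R1 ^ 4 * t\<^sup>2) \<le> real c"
    unfolding c_def by (rule real_nat_ceiling_ge)
  then have c: "384 * R2\<^sup>2 \<le> real c * R1 ^ 4 * t\<^sup>2"
    using t R1 by (simp add: pos_divide_le_eq mult.assoc)
  have "0 < real c"
    using pos le by linarith
  then have c_pos: "1 \<le> c"
    by simp
  show "?concl 4 100 t R1 R2"
  proof (intro exI[of _ "8 * c"] conjI allI impI)
    fix d \<Omega> M p N \<phi> u m \<xi> H v f0 g F
    assume setting: "\<Omega> \<subseteq> {x :: nat \<Rightarrow> real. \<forall>i\<ge>d. x i = 0} \<and> compact \<Omega> \<and> prob_space M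
      \<and> space M = \<Omega> \<and> sets M = sets (restrict_space borel \<Omega>) \<and> 2 \<le> p
      \<and> (\<forall>j\<in>{1..N}. continuous_on \<Omega> (\<phi> j) \<and> (\<forall>x\<in>\<Omega>. cmod (\<phi> j x) \<le> 1))
      \<and> riesz_system M \<phi> N R1 R2 \<and> 1 \<le> u \<and> u \<le> N \<and> (\<forall>j\<in>{1..m}. \<xi> j \<in> \<Omega>)
      \<and> universal_discretization M 2 m \<xi> \<phi> N u \<and> nikolskii M \<phi> N 2 p H u"
      and input: "real v \<le> real u / (1 + real (8 * c)) \<and> continuous_on \<Omega> f0 \<and> womp_run m \<xi> \<phi> N t f0 g F"
    interpret womp_sampling M \<Omega> \<phi> N u m \<xi> R1 R2 p H t f0 g F
      by (intro womp_sampling.intro compact_prob_domain.intro compact_prob_domain_axioms.intro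
          womp_sampling_axioms.intro) (use setting input t R1 in auto)
    have "real v * (1 + real (8 * c)) \<le> real u"
      using input by (simp add: pos_le_divide_eq)
    then have "real (v + 8 * c * v) \<le> real u"
      by (simp add: algebra_simps)
    then have "v + 8 * c * v \<le> u"
      by (simp only: of_nat_le_iff)
    from womp_sampling_bounds[OF this c]
    show "dnorm m \<xi> (F (8 * c * v)) \<le> 4 * sigma_disc m \<xi> \<phi> N v f0"
      and "Lp_norm M p (F (8 * c * v)) \<le> H * 100 * sigma_xi M m \<xi> p \<phi> N v f0"
      by simp_all
  qed (use c_pos in simp)
qed

end
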